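(* Let $m\ge1$. The map sending the double coset $\Gamma(4m)\,g\,\Gamma_\ell(2)$ of $g\in\Gamma_{2m}(2)$ to the cohomology class of $f_{\tau(g)g^{-1}}$ is a well-defined bijection $$\Gamma(4m)\backslash\Gamma_{2m}(2)/\Gamma_\ell(2)\ \cong\ H^1(\mathbb C/\mathbb R,\Gamma(4m))$$ (induced by the short exact sequence $1\to\Gamma(4m)\to\Gamma_{2m}(2)\to\Gamma(4m)\backslash\Gamma_{2m}(2)\to1$).
   Context: $\mathbf{Sp}(2n,\mathbb Z)$: integral $2n\times2n$ matrices $g=\begin{pmatrix}A&B\\C&D\end{pmatrix}$ with ${}^tgJg=J$, $J=\begin{pmatrix}0&I\\-I&0\end{pmatrix}$. $\tau\begin{pmatrix}A&B\\C&D\end{pmatrix}=\begin{pmatrix}A&-B\\-C&D\end{pmatrix}$. $\Gamma(4m)=\{\gamma\in\mathbf{Sp}(2n,\mathbb Z):\gamma\equiv I\bmod4m\}$; $\Gamma_{2m}(2)=\{\begin{pmatrix}A&B\\C&D\end{pmatrix}\in\mathbf{Sp}(2n,\mathbb Z):A,D\equiv I\bmod2,\ B,C\equiv0\bmod2m\}$; $\Gamma_\ell(2)=\{U\in\mathbf{GL}(n,\mathbb Z):U\equiv I\bmod2\}$ embedded via $U\mapsto\mathrm{diag}(U,{}^tU^{-1})$. For $\gamma\in\Gamma(4m)$ with $\gamma\tau(\gamma)=I$, $f_\gamma$ is the 1-cocycle of $\mathrm{Gal}(\mathbb C/\mathbb R)=\{1,\tau\}$ with $f_\gamma(\tau)=\gamma$;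 $f_\gamma,f_{\gamma'}$ are cohomologous if $\gamma'=\tau(h)\gamma h^{-1}$ for some $h\in\Gamma(4m)$; $H^1(\mathbb C/\mathbb R,\Gamma(4m))$ is the set of classes. *)

theory Defs
  imports "Jordan_Normal_Form.Matrix" "HOL-Number_Theory.Cong"
begin

text \<open>Integral 2n x 2n matrices are represented as int mat of dimension 2n x 2n;
  block (A,B;C,D) means rows/columns with index < n belong to the first block.\<close>

definition Jmat :: "nat \<Rightarrow> int mat" where
  "Jmat n = four_block_mat (0\<^sub>m n n) (1\<^sub>m n) (- 1\<^sub>m n) (0\<^sub>m n n)"

definition Sp :: "nat \<Rightarrow> int mat set" where
  "Sp n = {g \<in> carrier_mat (2*n) (2*n). transpose_mat g * Jmat n * g = Jmat n}"

definition tau :: "nat \<Rightarrow> int mat \<Rightarrow> int mat" where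
  "tau n g = mat (dim_row g) (dim_col g)
     (\<lambda>(i,j). if (i < n) = (j < n) then g $$ (i,j) else - g $$ (i,j))"

definition Gamma_princ :: "nat \<Rightarrow> int \<Rightarrow> int mat set" where
  "Gamma_princ n N = {g \<in> Sp n. \<forall>i<2*n. \<forall>j<2*n.
      [g $$ (i,j) = (1\<^sub>m (2*n) :: int mat) $$ (i,j)] (mod N)}"

definition Gamma_2m_2 :: "nat \<Rightarrow> int \<Rightarrow> int mat set" where
  "Gamma_2m_2 n m = {g \<in> Sp n. \<forall>i<2*n. \<forall>j<2*n.
      (if (i < n) = (j < n)
       then [g $$ (i,j) = (1\<^sub>m (2*n) :: int mat) $$ (i,j)] (mod 2)
       else [g $$ (i,j) = 0] (mod 2*m))}"

text \<open>Gamma_l(2) = {U in GL(n,Z) : U = I mod 2}, embedded via U |-> diag(U, (U^t)^{-1}).\<close>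
definition Gamma_l_2 :: "nat \<Rightarrow> int mat set" where
  "Gamma_l_2 n = {four_block_mat U (0\<^sub>m n n) (0\<^sub>m n n) (transpose_mat V) | U V.
      U \<in> carrier_mat n n \<and> V \<in> carrier_mat n n \<and> U * V = 1\<^sub>m n \<and> V * U = 1\<^sub>m n \<and>
      (\<forall>i<n. \<forall>j<n. [U $$ (i,j) = (1\<^sub>m n :: int mat) $$ (i,j)] (mod 2))}"

definition int_mat_inv :: "int mat \<Rightarrow> int mat" where
  "int_mat_inv g = (SOME h. h \<in> carrier_mat (dim_row g) (dim_row g) \<and>
      g * h = 1\<^sub>m (dim_row g) \<and> h * g = 1\<^sub>m (dim_row g))"

text \<open>1-cocycles f_gamma of Gal(C/R) in Gamma(4m): gamma in Gamma(4m) with gamma tau(gamma) = I.\<close>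
definition cocycles :: "nat \<Rightarrow> int \<Rightarrow> int mat set" where
  "cocycles n N = {\<gamma> \<in> Gamma_princ n N. \<gamma> * tau n \<gamma> = 1\<^sub>m (2*n)}"

definition cohomologous :: "nat \<Rightarrow> int \<Rightarrow> int mat rel" where
  "cohomologous n N = {(\<gamma>, \<gamma>'). \<gamma> \<in> cocycles n N \<and> \<gamma>' \<in> cocycles n N \<and>
      (\<exists>h h'. h \<in> Gamma_princ n N \<and> h' \<in> carrier_mat (2*n) (2*n) \<and>
         h * h' = 1\<^sub>m (2*n) \<and> h' * h = 1\<^sub>m (2*n) \<and> \<gamma>' = tau n h * \<gamma> * h')}"

definition H1 :: "nat \<Rightarrow> int \<Rightarrow> int mat set set" where
  "H1 n N = cocycles n N // cohomologous n N"

definition coh_class :: "nat \<Rightarrow> int \<Rightarrow> int mat \<Rightarrow> int mat set" where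
  "coh_class n N \<gamma> = cohomologous n N `` {\<gamma>}"

definition dcoset :: "nat \<Rightarrow> int \<Rightarrow> int mat \<Rightarrow> int mat set" where
  "dcoset n N g = {a * g * u | a u. a \<in> Gamma_princ n N \<and> u \<in> Gamma_l_2 n}"

definition double_cosets :: "nat \<Rightarrow> int \<Rightarrow> int mat set set" where
  "double_cosets n m = dcoset n (4*m) ` Gamma_2m_2 n m"

end

theory Submission
  imports Defs "Jordan_Normal_Form.Determinant"
begin

text \<open>
  Write \<open>\<sigma> = diag(I, -I)\<close>, so that \<open>\<tau> g = \<sigma> g \<sigma>\<close>. Well-definedness and injectivity are direct
  computations: if \<open>g\<^sub>2 = a g\<^sub>1 u\<close> with \<open>a \<in> \<Gamma>(4m)\<close> and \<open>u \<in> \<Gamma>\<^sub>l(2)\<close> (so \<open>\<tau> u = u\<close>), then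
  \<open>\<tau>(g\<^sub>2) g\<^sub>2\<^sup>-\<^sup>1 = \<tau>(a) \<tau>(g\<^sub>1) g\<^sub>1\<^sup>-\<^sup>1 a\<^sup>-\<^sup>1\<close>; conversely, if the two cocycles are cohomologous via \<open>h\<close>,
  then \<open>u = g\<^sub>1\<^sup>-\<^sup>1 h\<^sup>-\<^sup>1 g\<^sub>2\<close> is \<open>\<tau>\<close>-invariant and \<open>\<equiv> I\<close> mod 2, i.e. lies in \<open>\<Gamma>\<^sub>l(2)\<close>.

  Surjectivity: for a cocycle \<open>\<gamma>\<close> the matrix \<open>M = \<sigma> \<gamma>\<close> is an involution with \<open>M\<^sup>T J M = -J\<close> and
  \<open>M \<equiv> \<sigma>\<close> mod 4. Hence \<open>P = (I + M)/2\<close> is integral; it maps onto the \<open>+1\<close>-eigenlattice \<open>L\<^sub>+\<close>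
  while \<open>P - I\<close> maps into the \<open>-1\<close>-eigenlattice \<open>L\<^sub>-\<close>, and both are isotropic for the symplectic
  form \<open>\<omega>\<close>. Since \<open>P \<equiv> diag(I, 0)\<close> mod 2, a basis argument for the projection of \<open>L\<^sub>+\<close> to the
  first \<open>n\<close> coordinates gives \<open>X\<^sub>1, \<dots>, X\<^sub>n \<in> L\<^sub>+\<close> congruent to the unit vectors mod 2 together with
  integral functionals \<open>w\<^sub>j\<close> with \<open>w\<^sub>j(X\<^sub>i) = \<delta>\<^sub>i\<^sub>j\<close>. Then \<open>Q\<^sub>j = (P - I) J w\<^sub>j \<in> L\<^sub>-\<close> satisfies
  \<open>\<omega>(X\<^sub>i, Q\<^sub>j) = \<delta>\<^sub>i\<^sub>j\<close>, so \<open>g = [X | Q]\<close> is symplectic with \<open>M g = g \<sigma>\<close>, i.e. \<open>\<tau>(g) = \<gamma> g\<close>,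
  and \<open>g \<in> \<Gamma>\<^sub>2\<^sub>m(2)\<close>.
\<close>

section \<open>Integer matrices\<close>

lemma mat_mult_left_right_inverse_comm_ring:
  fixes A B :: "'a :: comm_ring_1 mat"
  assumes A: "A \<in> carrier_mat n n" and B: "B \<in> carrier_mat n n" and AB: "A * B = 1\<^sub>m n"
  shows "B * A = 1\<^sub>m n"
proof -
  have det_BA: "det B * det A = 1" using det_mult[OF A B] AB by (simp add: mult.commute)
  have adj: "adj_mat A \<in> carrier_mat n n" "adj_mat A * A = det A \<cdot>\<^sub>m 1\<^sub>m n" using adj_mat[OF A] by auto
  have "adj_mat A = adj_mat A * (A * B)" using AB adj by simp
  also have "\<dots> = det A \<cdot>\<^sub>m B"
    using adj A B by (simp add: assoc_mult_mat[symmetric, of _ n n _ n _ n] mult_smult_assoc_mat[OF one_carrier_mat B])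
  finally have "det B \<cdot>\<^sub>m adj_mat A = B"
    using det_BA B by (intro eq_matI) (auto simp: mult.assoc[symmetric])
  then have "B * A = det B \<cdot>\<^sub>m (adj_mat A * A)" using adj A by (metis mult_smult_assoc_mat)
  then show ?thesis using adj det_BA by (intro eq_matI) (auto simp: mult.assoc[symmetric])
qed

lemma mult_carrier_sq_mat[simp]: "A \<in> carrier_mat k k \<Longrightarrow> B \<in> carrier_mat k k \<Longrightarrow> A * B \<in> carrier_mat k k"
  by (rule mult_carrier_mat)

lemma assoc_mult_sq_mat:
  "A \<in> carrier_mat k k \<Longrightarrow> B \<in> carrier_mat k k \<Longrightarrow> C \<in> carrier_mat k k \<Longrightarrow> A * B * C = A * (B * C)"
  by (rule assoc_mult_mat)

lemma smult_vec_cancel_int: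
  assumes "c \<noteq> 0" "c \<cdot>\<^sub>v x = c \<cdot>\<^sub>v (y :: int vec)"
  shows "x = y"
proof (rule eq_vecI)
  show dim: "dim_vec x = dim_vec y" using arg_cong[OF assms(2), of dim_vec] by simp
  fix i assume "i < dim_vec y"
  then show "x $ i = y $ i" using arg_cong[OF assms(2), of "\<lambda>v. v $ i"] assms(1) dim by simp
qed

lemma mult_mat_vec_carrier_sq[simp]: "A \<in> carrier_mat k k \<Longrightarrow> v \<in> carrier_vec k \<Longrightarrow> A *\<^sub>v v \<in> carrier_vec k"
  by (rule mult_mat_vec_carrier)

lemma mult_mat_vec_uminus:
  "A \<in> carrier_mat nr nc \<Longrightarrow> v \<in> carrier_vec nc \<Longrightarrow> A *\<^sub>v (- v) = - (A *\<^sub>v (v :: 'a :: comm_ring vec))"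
  by (intro eq_vecI) auto

lemma mult_mat_vec_smult:
  "A \<in> carrier_mat nr nc \<Longrightarrow> v \<in> carrier_vec nc \<Longrightarrow> A *\<^sub>v (k \<cdot>\<^sub>v v) = (k :: 'a :: comm_ring) \<cdot>\<^sub>v (A *\<^sub>v v)"
  by (intro eq_vecI) auto

definition cong_mat :: "int \<Rightarrow> int mat \<Rightarrow> int mat \<Rightarrow> bool" where
  "cong_mat N A B \<longleftrightarrow> dim_row A = dim_row B \<and> dim_col A = dim_col B \<and>
     (\<forall>i<dim_row A. \<forall>j<dim_col A. [A $$ (i,j) = B $$ (i,j)] (mod N))"

lemma cong_mat_refl: "cong_mat N A A"
  unfolding cong_mat_def by auto

lemma cong_mat_sym: "cong_mat N A B \<Longrightarrow> cong_mat N B A"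
  unfolding cong_mat_def by (auto simp: cong_sym)

lemma cong_mat_dvd_modulus: "cong_mat N A B \<Longrightarrow> d dvd N \<Longrightarrow> cong_mat d A B"
  unfolding cong_mat_def by (metis cong_dvd_modulus)

lemma cong_mat_transpose: "cong_mat N A B \<Longrightarrow> cong_mat N (transpose_mat A) (transpose_mat B)"
  unfolding cong_mat_def by auto

lemma cong_mat_mult:
  assumes "cong_mat N A A'" "cong_mat N B B'" "dim_col A = dim_row B"
  shows "cong_mat N (A * B) (A' * B')"
  unfolding cong_mat_def
proof (intro conjI allI impI)
  show "dim_row (A * B) = dim_row (A' * B')" "dim_col (A * B) = dim_col (A' * B')"
    using assms unfolding cong_mat_def by auto
  fix i j assume ij: "i < dim_row (A * B)" "j < dim_col (A * B)"
  have "[(\<Sum>k = 0..<dim_col A. A $$ (i,k) * B $$ (k,j)) = (\<Sum>k = 0..<dim_col A. A' $$ (i,k) * B' $$ (k,j))] (mod N)"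
    using ij assms unfolding cong_mat_def by (intro cong_sum cong_mult) auto
  then show "[(A * B) $$ (i,j) = (A' * B') $$ (i,j)] (mod N)"
    using ij assms unfolding cong_mat_def by (auto simp: scalar_prod_def)
qed

lemma cong_mat_inverse:
  assumes A: "A \<in> carrier_mat k k" "A' \<in> carrier_mat k k" "A' * A = 1\<^sub>m k"
    and B: "B \<in> carrier_mat k k" "B' \<in> carrier_mat k k" "B * B' = 1\<^sub>m k"
    and AB: "cong_mat N A B"
  shows "cong_mat N A' B'"
proof -
  have "cong_mat N (B * B') (A * B')"
    by (rule cong_mat_mult[OF cong_mat_sym[OF AB] cong_mat_refl]) (use B in auto)
  then have "cong_mat N (A' * (B * B')) (A' * (A * B'))"
    by (rule cong_mat_mult[OF cong_mat_refl]) (use A B in auto)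
  moreover have "A' * (A * B') = B'"
    using A B by (metis assoc_mult_mat left_mult_one_mat)
  ultimately show ?thesis using A B by simp
qed

section \<open>The sign matrix, the symplectic group and \<open>\<tau>\<close>\<close>

definition block_sign :: "nat \<Rightarrow> nat \<Rightarrow> int" where
  "block_sign n i = (if i < n then 1 else -1)"

definition sign_mat :: "nat \<Rightarrow> int mat" where
  "sign_mat n = mat (2*n) (2*n) (\<lambda>(i,j). if i = j then block_sign n i else 0)"

lemma sign_mat_carrier[simp]: "sign_mat n \<in> carrier_mat (2*n) (2*n)"
  and sign_mat_dims[simp]: "dim_row (sign_mat n) = 2*n" "dim_col (sign_mat n) = 2*n"
  unfolding sign_mat_def by auto

lemma index_sign_mat_mult:
  assumes "A \<in> carrier_mat (2*n) nc" "i < 2*n" "j < nc"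
  shows "(sign_mat n * A) $$ (i,j) = block_sign n i * A $$ (i,j)"
  using assms by (simp add: sign_mat_def scalar_prod_def if_distrib[of "\<lambda>x. x * _"] cong: if_cong)

lemma index_mult_sign_mat:
  assumes "A \<in> carrier_mat nr (2*n)" "i < nr" "j < 2*n"
  shows "(A * sign_mat n) $$ (i,j) = A $$ (i,j) * block_sign n j"
  using assms by (simp add: sign_mat_def scalar_prod_def if_distrib[of "\<lambda>x. _ * x"] cong: if_cong)

lemma index_sign_conj:
  assumes "A \<in> carrier_mat (2*n) (2*n)" "i < 2*n" "j < 2*n"
  shows "(sign_mat n * A * sign_mat n) $$ (i,j) = block_sign n i * A $$ (i,j) * block_sign n j"
proof -
  have "(sign_mat n * A * sign_mat n) $$ (i,j) = (sign_mat n * A) $$ (i,j) * block_sign n j"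
    by (rule index_mult_sign_mat) (use assms in auto)
  then show ?thesis using index_sign_mat_mult[OF assms] by simp
qed

lemma tau_eq_sign_conj:
  assumes "g \<in> carrier_mat (2*n) (2*n)"
  shows "tau n g = sign_mat n * g * sign_mat n"
proof (rule eq_matI)
  fix i j assume "i < dim_row (sign_mat n * g * sign_mat n)" "j < dim_col (sign_mat n * g * sign_mat n)"
  then show "tau n g $$ (i,j) = (sign_mat n * g * sign_mat n) $$ (i,j)"
    using assms by (subst index_sign_conj) (auto simp: tau_def block_sign_def)
qed (use assms in \<open>auto simp: tau_def\<close>)

lemma sign_mat_squared: "sign_mat n * sign_mat n = 1\<^sub>m (2*n)"
proof (rule eq_matI)
  fix i j assume "i < dim_row (1\<^sub>m (2*n) :: int mat)" "j < dim_col (1\<^sub>m (2*n) :: int mat)"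
  then show "(sign_mat n * sign_mat n) $$ (i,j) = 1\<^sub>m (2*n) $$ (i,j)"
    using index_sign_mat_mult[OF sign_mat_carrier, of i n j] by (auto simp: sign_mat_def block_sign_def)
qed auto

lemma transpose_sign_mat: "transpose_mat (sign_mat n) = sign_mat n"
  by (rule eq_matI) (auto simp: sign_mat_def)

lemma Jmat_carrier[simp]: "Jmat n \<in> carrier_mat (2*n) (2*n)"
  unfolding Jmat_def mult_2 by (rule four_block_carrier_mat) auto

lemma Jmat_dims[simp]: "dim_row (Jmat n) = 2*n" "dim_col (Jmat n) = 2*n"
  using carrier_matD[OF Jmat_carrier[of n]] by auto

lemma index_Jmat: "i < 2*n \<Longrightarrow> j < 2*n \<Longrightarrow> Jmat n $$ (i,j) =
  (if i < n \<and> j = i + n then 1 else if n \<le> i \<and> i = j + n then -1 else 0)"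
  unfolding Jmat_def by (auto simp: index_mat_four_block)

lemma sign_conj_Jmat: "sign_mat n * Jmat n * sign_mat n = - Jmat n"
proof (rule eq_matI)
  fix i j assume "i < dim_row (- Jmat n)" "j < dim_col (- Jmat n)"
  then show "(sign_mat n * Jmat n * sign_mat n) $$ (i,j) = (- Jmat n) $$ (i,j)"
    by (subst index_sign_conj) (auto simp: index_Jmat block_sign_def)
qed auto

lemma transpose_Jmat: "transpose_mat (Jmat n) = - Jmat n"
  by (rule eq_matI) (auto simp: index_Jmat)

lemma Jmat_mult_vec:
  assumes "y \<in> carrier_vec (2*n)"
  shows "Jmat n *\<^sub>v y = vec (2*n) (\<lambda>i. if i < n then y $ (i+n) else - y $ (i-n))"
proof (rule eq_vecI)
  fix i assume "i < dim_vec (vec (2*n) (\<lambda>i. if i < n then y $ (i+n) else - y $ (i-n)))"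
  then have i: "i < 2*n" by simp
  have "(Jmat n *\<^sub>v y) $ i = (\<Sum>k = 0..<2*n.
      (if (if i < n then i + n else i - n) = k then (if i < n then 1 else -1) else 0) * y $ k)"
    using i assms by (auto simp: scalar_prod_def index_Jmat intro!: sum.cong)
  then show "(Jmat n *\<^sub>v y) $ i = vec (2*n) (\<lambda>i. if i < n then y $ (i+n) else - y $ (i-n)) $ i"
    using i by (simp add: if_distrib[of "\<lambda>x. x * _"] cong: if_cong) linarith
qed (use assms in auto)

lemma Jmat_squared: "Jmat n * Jmat n = - 1\<^sub>m (2*n)"
proof (rule eq_matI)
  fix i j assume "i < dim_row (- 1\<^sub>m (2*n) :: int mat)" "j < dim_col (- 1\<^sub>m (2*n) :: int mat)"
  then have ij: "i < 2*n" "j < 2*n" by auto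
  have "(Jmat n * Jmat n) $$ (i,j) = (Jmat n *\<^sub>v col (Jmat n) j) $ i" using ij by simp
  also have "\<dots> = (- 1\<^sub>m (2*n)) $$ (i,j)" using ij by (subst Jmat_mult_vec) (auto simp: index_Jmat)
  finally show "(Jmat n * Jmat n) $$ (i,j) = (- 1\<^sub>m (2*n)) $$ (i,j)" .
qed auto

lemma Sp_carrier: "g \<in> Sp n \<Longrightarrow> g \<in> carrier_mat (2*n) (2*n)"
  unfolding Sp_def by auto

lemma one_Sp: "1\<^sub>m (2*n) \<in> Sp n"
  unfolding Sp_def by simp

lemma Sp_mult:
  assumes g: "g \<in> Sp n" and h: "h \<in> Sp n"
  shows "g * h \<in> Sp n"
proof -
  have gc: "g \<in> carrier_mat (2*n) (2*n)" and hc: "h \<in> carrier_mat (2*n) (2*n)"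
    using g h Sp_carrier by auto
  have "transpose_mat (g * h) * Jmat n * (g * h) = transpose_mat h * (transpose_mat g * Jmat n * g) * h"
    using gc hc by (simp add: transpose_mult assoc_mult_sq_mat[where k="2*n"])
  also have "\<dots> = Jmat n" using g h unfolding Sp_def by auto
  finally show ?thesis using gc hc unfolding Sp_def by auto
qed

lemma Sp_right_inverse:
  assumes g: "g \<in> Sp n" and h: "h \<in> carrier_mat (2*n) (2*n)" and gh: "g * h = 1\<^sub>m (2*n)"
  shows "h \<in> Sp n"
proof -
  have gc: "g \<in> carrier_mat (2*n) (2*n)" using g Sp_carrier by auto
  have "transpose_mat h * Jmat n * h = transpose_mat h * (transpose_mat g * Jmat n * g) * h"
    using g unfolding Sp_def by auto
  also have "\<dots> = transpose_mat (g * h) * Jmat n * (g * h)"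
    using gc h by (simp add: transpose_mult assoc_mult_sq_mat[where k="2*n"])
  also have "\<dots> = Jmat n" using gh by simp
  finally show ?thesis using h unfolding Sp_def by auto
qed

lemma int_mat_inv_Sp:
  assumes g: "g \<in> Sp n"
  shows "int_mat_inv g \<in> carrier_mat (2*n) (2*n)" "g * int_mat_inv g = 1\<^sub>m (2*n)"
    "int_mat_inv g * g = 1\<^sub>m (2*n)" "int_mat_inv g \<in> Sp n"
proof -
  have gc: "g \<in> carrier_mat (2*n) (2*n)" using g Sp_carrier by auto
  \<comment> \<open>the symplectic relation exhibits \<open>- J g\<^sup>T J\<close> as a left inverse\<close>
  let ?h = "- (Jmat n * transpose_mat g * Jmat n)"
  have hc: "?h \<in> carrier_mat (2*n) (2*n)" using gc by auto
  have "?h * g = - (Jmat n * (transpose_mat g * Jmat n * g))"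
    using gc by (simp add: assoc_mult_sq_mat[where k="2*n"])
  also have "\<dots> = 1\<^sub>m (2*n)" using g unfolding Sp_def by (simp add: Jmat_squared)
  finally have hg: "?h * g = 1\<^sub>m (2*n)" .
  have gh: "g * ?h = 1\<^sub>m (2*n)" by (rule mat_mult_left_right_inverse_comm_ring[OF hc gc hg])
  have "int_mat_inv g \<in> carrier_mat (dim_row g) (dim_row g) \<and> g * int_mat_inv g = 1\<^sub>m (dim_row g)
      \<and> int_mat_inv g * g = 1\<^sub>m (dim_row g)"
    unfolding int_mat_inv_def by (rule someI[of _ ?h]) (use hc hg gh gc in auto)
  then show c: "int_mat_inv g \<in> carrier_mat (2*n) (2*n)" and r: "g * int_mat_inv g = 1\<^sub>m (2*n)"
    and "int_mat_inv g * g = 1\<^sub>m (2*n)" using gc by auto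
  show "int_mat_inv g \<in> Sp n" by (rule Sp_right_inverse[OF g c r])
qed

lemma tau_dims[simp]: "dim_row (tau n g) = dim_row g" "dim_col (tau n g) = dim_col g"
  unfolding tau_def by auto

lemma tau_carrier[simp]: "g \<in> carrier_mat (2*n) (2*n) \<Longrightarrow> tau n g \<in> carrier_mat (2*n) (2*n)"
  unfolding tau_def by auto

lemma tau_mult:
  assumes "g \<in> carrier_mat (2*n) (2*n)" "h \<in> carrier_mat (2*n) (2*n)"
  shows "tau n (g * h) = tau n g * tau n h"
proof -
  have "tau n g * tau n h = sign_mat n * g * (sign_mat n * sign_mat n) * h * sign_mat n"
    using assms by (simp add: tau_eq_sign_conj assoc_mult_sq_mat[where k="2*n"])
  then show ?thesis
    using assms by (simp add: tau_eq_sign_conj sign_mat_squared assoc_mult_sq_mat[where k="2*n"])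
qed

lemma tau_one: "tau n (1\<^sub>m (2*n)) = 1\<^sub>m (2*n)"
  by (simp add: tau_eq_sign_conj sign_mat_squared)

lemma tau_tau:
  assumes "g \<in> carrier_mat (2*n) (2*n)"
  shows "tau n (tau n g) = g"
proof -
  have "tau n (tau n g) = (sign_mat n * sign_mat n) * g * (sign_mat n * sign_mat n)"
    using assms by (simp add: tau_eq_sign_conj assoc_mult_sq_mat[where k="2*n"])
  then show ?thesis using assms by (simp add: sign_mat_squared)
qed

lemma transpose_sign_conj_Jmat:
  assumes "g \<in> carrier_mat (2*n) (2*n)"
  shows "transpose_mat (sign_mat n * g) * Jmat n * (sign_mat n * g) = - (transpose_mat g * Jmat n * g)"
proof -
  have "transpose_mat (sign_mat n * g) * Jmat n * (sign_mat n * g)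
      = transpose_mat g * (sign_mat n * Jmat n * sign_mat n) * g"
    using assms by (simp add: transpose_mult[of _ "2*n" "2*n" _ "2*n"] transpose_sign_mat assoc_mult_sq_mat[where k="2*n"])
  then show ?thesis using assms by (simp add: sign_conj_Jmat)
qed

lemma tau_Sp:
  assumes g: "g \<in> Sp n"
  shows "tau n g \<in> Sp n"
proof -
  have gc: "g \<in> carrier_mat (2*n) (2*n)" using g Sp_carrier by auto
  have "transpose_mat (tau n g) * Jmat n * tau n g
      = transpose_mat (sign_mat n) * (transpose_mat (sign_mat n * g) * Jmat n * (sign_mat n * g)) * sign_mat n"
    using gc by (simp add: tau_eq_sign_conj transpose_mult[of _ "2*n" "2*n" _ "2*n"] assoc_mult_sq_mat[where k="2*n"])
  also have "\<dots> = Jmat n"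
    using g gc unfolding Sp_def by (simp add: transpose_sign_conj_Jmat transpose_sign_mat sign_conj_Jmat)
  finally show ?thesis using gc unfolding Sp_def by auto
qed

lemma tau_fixed_if_tau_mult:
  assumes A: "A \<in> Sp n" and u: "u \<in> carrier_mat (2*n) (2*n)" and eq: "tau n (A * u) = tau n A * u"
  shows "tau n u = u"
proof -
  have Ac: "A \<in> carrier_mat (2*n) (2*n)" using A Sp_carrier by auto
  note inv = int_mat_inv_Sp[OF tau_Sp[OF A]]
  have "tau n A * tau n u = tau n A * u" using eq tau_mult[OF Ac u] by simp
  then have "int_mat_inv (tau n A) * tau n A * tau n u = int_mat_inv (tau n A) * tau n A * u"
    using inv(1) Ac u by (simp add: assoc_mult_sq_mat[where k="2*n"])
  then show ?thesis using inv(3) u by simp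
qed

section \<open>The congruence subgroups and their double cosets\<close>

lemma cong_neg_self_iff: "[- x = x] (mod 2 * N) \<longleftrightarrow> [x = 0] (mod (N::int))"
proof -
  have "[- x = x] (mod 2 * N) \<longleftrightarrow> 2 * N dvd 2 * x"
    unfolding cong_iff_dvd_diff by (metis diff_minus_eq_add dvd_minus_iff minus_diff_eq mult_2)
  then show ?thesis by (simp add: cong_0_iff)
qed

lemma cong_tau_iff:
  assumes "g \<in> carrier_mat (2*n) (2*n)"
  shows "cong_mat (2 * N) (tau n g) g \<longleftrightarrow>
    (\<forall>i<2*n. \<forall>j<2*n. (i < n) \<noteq> (j < n) \<longrightarrow> [g $$ (i,j) = 0] (mod N))"
  using assms by (auto simp: cong_mat_def tau_def cong_neg_self_iff)

lemma Gamma_princ_iff: "g \<in> Gamma_princ n N \<longleftrightarrow> g \<in> Sp n \<and> cong_mat N g (1\<^sub>m (2*n))"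
  unfolding Gamma_princ_def cong_mat_def
  by (auto dest: Sp_carrier simp del: index_one_mat) (auto dest: Sp_carrier)

lemma Gamma_princ_carrier: "a \<in> Gamma_princ n N \<Longrightarrow> a \<in> carrier_mat (2*n) (2*n)"
  unfolding Gamma_princ_iff using Sp_carrier by auto

lemma one_Gamma_princ: "1\<^sub>m (2*n) \<in> Gamma_princ n N"
  unfolding Gamma_princ_iff using one_Sp cong_mat_refl by auto

lemma Gamma_princ_mult:
  assumes "g \<in> Gamma_princ n N" "h \<in> Gamma_princ n N"
  shows "g * h \<in> Gamma_princ n N"
proof -
  have g: "g \<in> Sp n" "cong_mat N g (1\<^sub>m (2*n))" and h: "h \<in> Sp n" "cong_mat N h (1\<^sub>m (2*n))"
    using assms unfolding Gamma_princ_iff by auto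
  have "cong_mat N (g * h) (1\<^sub>m (2*n) * 1\<^sub>m (2*n))"
    by (rule cong_mat_mult[OF g(2) h(2)]) (use Sp_carrier[OF g(1)] Sp_carrier[OF h(1)] in auto)
  then show ?thesis using Sp_mult[OF g(1) h(1)] unfolding Gamma_princ_iff by auto
qed

lemma Gamma_princ_inverse:
  assumes g: "g \<in> Gamma_princ n N" and h: "h \<in> carrier_mat (2*n) (2*n)"
    and gh: "g * h = 1\<^sub>m (2*n)" and hg: "h * g = 1\<^sub>m (2*n)"
  shows "h \<in> Gamma_princ n N"
proof -
  have gS: "g \<in> Sp n" and gN: "cong_mat N g (1\<^sub>m (2*n))" using g unfolding Gamma_princ_iff by auto
  have "cong_mat N h (1\<^sub>m (2*n))"
    by (rule cong_mat_inverse[OF Gamma_princ_carrier[OF g] h hg _ _ _ gN]) auto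
  then show ?thesis using Sp_right_inverse[OF gS h gh] unfolding Gamma_princ_iff by auto
qed

lemma Gamma_princ_dvd: "g \<in> Gamma_princ n N \<Longrightarrow> d dvd N \<Longrightarrow> g \<in> Gamma_princ n d"
  unfolding Gamma_princ_iff using cong_mat_dvd_modulus by blast

lemma Gamma_princ_int_mat_inv: "a \<in> Gamma_princ n N \<Longrightarrow> int_mat_inv a \<in> Gamma_princ n N"
  using Gamma_princ_inverse int_mat_inv_Sp Gamma_princ_iff by blast

lemma Gamma_2m_2_iff:
  "g \<in> Gamma_2m_2 n m \<longleftrightarrow> g \<in> Sp n \<and> cong_mat 2 g (1\<^sub>m (2*n)) \<and> cong_mat (4*m) (tau n g) g"
proof (cases "g \<in> Sp n")
  case True
  then have gc: "g \<in> carrier_mat (2*n) (2*n)" by (rule Sp_carrier)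
  have "cong_mat (4*m) (tau n g) g \<longleftrightarrow>
      (\<forall>i<2*n. \<forall>j<2*n. (i < n) \<noteq> (j < n) \<longrightarrow> [g $$ (i,j) = 0] (mod 2*m))"
    using cong_tau_iff[OF gc, of "2*m"] by (simp add: mult.assoc)
  moreover have "[g $$ (i,j) = 0] (mod 2*m) \<Longrightarrow> [g $$ (i,j) = 0] (mod 2)" for i j
    by (rule cong_dvd_modulus) auto
  ultimately show ?thesis
    using True gc unfolding Gamma_2m_2_def cong_mat_def by auto (metis index_one_mat(1))+
qed (auto simp: Gamma_2m_2_def)

lemma cong_mat_four_block:
  assumes "cong_mat N A A'" "cong_mat N B B'" "cong_mat N C C'" "cong_mat N D D'"
    and "A \<in> carrier_mat k k" "B \<in> carrier_mat k k" "C \<in> carrier_mat k k" "D \<in> carrier_mat k k"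
  shows "cong_mat N (four_block_mat A B C D) (four_block_mat A' B' C' D')"
  using assms unfolding cong_mat_def by auto

lemma Gamma_2m_2_Gamma_princ_2: "g \<in> Gamma_2m_2 n m \<Longrightarrow> g \<in> Gamma_princ n 2"
  unfolding Gamma_2m_2_iff Gamma_princ_iff by blast

lemma transpose_block_diag_Jmat:
  assumes U: "U \<in> carrier_mat n n" and D: "D \<in> carrier_mat n n"
  shows "transpose_mat (four_block_mat U (0\<^sub>m n n) (0\<^sub>m n n) D) * Jmat n * four_block_mat U (0\<^sub>m n n) (0\<^sub>m n n) D
    = four_block_mat (0\<^sub>m n n) (transpose_mat U * D) (- (transpose_mat D * U)) (0\<^sub>m n n)"
proof -
  have "transpose_mat (four_block_mat U (0\<^sub>m n n) (0\<^sub>m n n) D)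
      = four_block_mat (transpose_mat U) (0\<^sub>m n n) (0\<^sub>m n n) (transpose_mat D)"
    using U D by (subst transpose_four_block_mat[where ?nr1.0=n and ?nc1.0=n and ?nr2.0=n and ?nc2.0=n]) auto
  moreover have "four_block_mat (transpose_mat U) (0\<^sub>m n n) (0\<^sub>m n n) (transpose_mat D) * Jmat n
      = four_block_mat (0\<^sub>m n n) (transpose_mat U) (- transpose_mat D) (0\<^sub>m n n)"
    unfolding Jmat_def using U D
    by (subst mult_four_block_mat[where ?nr1.0=n and ?n1.0=n and ?n2.0=n and ?nr2.0=n and ?nc1.0=n and ?nc2.0=n]) auto
  moreover have "four_block_mat (0\<^sub>m n n) (transpose_mat U) (- transpose_mat D) (0\<^sub>m n n) * four_block_mat U (0\<^sub>m n n) (0\<^sub>m n n) D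
      = four_block_mat (0\<^sub>m n n) (transpose_mat U * D) (- (transpose_mat D * U)) (0\<^sub>m n n)"
    using U D
    by (subst mult_four_block_mat[where ?nr1.0=n and ?n1.0=n and ?n2.0=n and ?nr2.0=n and ?nc1.0=n and ?nc2.0=n]) auto
  ultimately show ?thesis by simp
qed

lemma Gamma_l_2_D:
  assumes "u \<in> Gamma_l_2 n"
  shows "u \<in> Sp n \<and> cong_mat 2 u (1\<^sub>m (2*n)) \<and> tau n u = u"
proof -
  obtain U V where u: "u = four_block_mat U (0\<^sub>m n n) (0\<^sub>m n n) (transpose_mat V)"
    and U: "U \<in> carrier_mat n n" and V: "V \<in> carrier_mat n n" and UV: "U * V = 1\<^sub>m n" and VU: "V * U = 1\<^sub>m n"
    and U_mod_2: "\<forall>i<n. \<forall>j<n. [U $$ (i,j) = (1\<^sub>m n :: int mat) $$ (i,j)] (mod 2)"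
    using assms unfolding Gamma_l_2_def by blast
  have uc: "u \<in> carrier_mat (2*n) (2*n)" unfolding u mult_2 using U V by auto
  have "transpose_mat U * transpose_mat V = 1\<^sub>m n"
    using U V VU by (metis transpose_mult transpose_one)
  then have "transpose_mat u * Jmat n * u = Jmat n"
    unfolding u using transpose_block_diag_Jmat[OF U, of "transpose_mat V"] V VU by (simp add: Jmat_def)
  then have "u \<in> Sp n" using uc unfolding Sp_def by auto
  moreover have "cong_mat 2 u (1\<^sub>m (2*n))"
  proof -
    have U2: "cong_mat 2 U (1\<^sub>m n)" using U_mod_2 U unfolding cong_mat_def by auto
    have "cong_mat 2 V (1\<^sub>m n)" by (rule cong_mat_inverse[OF U V VU _ _ _ U2]) auto
    then have "cong_mat 2 (transpose_mat V) (1\<^sub>m n)" using cong_mat_transpose by fastforce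
    then show ?thesis
      unfolding u mult_2 four_block_one_mat[symmetric] using U V U2
      by (intro cong_mat_four_block cong_mat_refl) auto
  qed
  moreover have "tau n u = u" by (rule eq_matI) (use uc U V in \<open>auto simp: tau_def u\<close>)
  ultimately show ?thesis by blast
qed

lemma Gamma_l_2_I:
  assumes u: "u \<in> Sp n \<and> cong_mat 2 u (1\<^sub>m (2*n)) \<and> tau n u = u"
  shows "u \<in> Gamma_l_2 n"
proof -
  have uc: "u \<in> carrier_mat (2*n) (2*n)" using u Sp_carrier by auto
  define U where "U = mat n n (\<lambda>(i,j). u $$ (i,j))"
  define D where "D = mat n n (\<lambda>(i,j). u $$ (i+n,j+n))"
  have U: "U \<in> carrier_mat n n" and D: "D \<in> carrier_mat n n" unfolding U_def D_def by auto
  have off_diag: "u $$ (i,j) = 0" if "i < 2*n" "j < 2*n" "(i < n) \<noteq> (j < n)" for i j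
    using arg_cong[of _ _ "\<lambda>A. A $$ (i,j)", OF conjunct2[OF conjunct2[OF u]]] that uc
    by (auto simp: tau_def)
  have u_eq: "u = four_block_mat U (0\<^sub>m n n) (0\<^sub>m n n) D"
    by (rule eq_matI) (use uc U D off_diag in \<open>auto simp: U_def D_def\<close>)
  have blocks: "four_block_mat (0\<^sub>m n n) (transpose_mat U * D) (- (transpose_mat D * U)) (0\<^sub>m n n) = Jmat n"
    using transpose_block_diag_Jmat[OF U D] u u_eq unfolding Sp_def by simp
  have UD: "transpose_mat U * D = 1\<^sub>m n"
  proof (rule eq_matI)
    fix i j assume ij: "i < dim_row (1\<^sub>m n :: int mat)" "j < dim_col (1\<^sub>m n :: int mat)"
    have "four_block_mat (0\<^sub>m n n) (transpose_mat U * D) (- (transpose_mat D * U)) (0\<^sub>m n n) $$ (i, j + n)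
        = Jmat n $$ (i, j + n)" using blocks by simp
    then show "(transpose_mat U * D) $$ (i,j) = 1\<^sub>m n $$ (i,j)" using ij U D unfolding Jmat_def by simp
  qed (use U D in auto)
  have DU: "D * transpose_mat U = 1\<^sub>m n"
    by (rule mat_mult_left_right_inverse_comm_ring[OF _ D UD]) (use U in auto)
  have "U * transpose_mat D = transpose_mat (D * transpose_mat U)"
    using U D by (simp add: transpose_mult[of D n n "transpose_mat U" n])
  moreover have "transpose_mat D * U = transpose_mat (transpose_mat U * D)"
    using U D by (simp add: transpose_mult[of "transpose_mat U" n n D n])
  ultimately have "U * transpose_mat D = 1\<^sub>m n" "transpose_mat D * U = 1\<^sub>m n"
    using DU UD by simp_all
  moreover have "\<forall>i<n. \<forall>j<n. [U $$ (i,j) = (1\<^sub>m n :: int mat) $$ (i,j)] (mod 2)"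
    using u uc unfolding cong_mat_def U_def by auto
  ultimately show ?thesis
    unfolding Gamma_l_2_def using u_eq U D by (intro CollectI exI[of _ U] exI[of _ "transpose_mat D"]) auto
qed

lemma Gamma_l_2_iff: "u \<in> Gamma_l_2 n \<longleftrightarrow> u \<in> Gamma_princ n 2 \<and> tau n u = u"
  unfolding Gamma_princ_iff using Gamma_l_2_D Gamma_l_2_I by blast

lemma Gamma_l_2_Sp: "u \<in> Gamma_l_2 n \<Longrightarrow> u \<in> Sp n"
  unfolding Gamma_l_2_iff Gamma_princ_iff by auto

lemma Gamma_l_2_carrier: "u \<in> Gamma_l_2 n \<Longrightarrow> u \<in> carrier_mat (2*n) (2*n)"
  using Gamma_l_2_Sp Sp_carrier by auto

lemma one_Gamma_l_2: "1\<^sub>m (2*n) \<in> Gamma_l_2 n"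
  unfolding Gamma_l_2_iff using one_Gamma_princ tau_one by auto

lemma Gamma_l_2_mult:
  assumes "u \<in> Gamma_l_2 n" "v \<in> Gamma_l_2 n"
  shows "u * v \<in> Gamma_l_2 n"
  using assms Gamma_princ_mult tau_mult[OF Gamma_princ_carrier Gamma_princ_carrier]
  unfolding Gamma_l_2_iff by metis

lemma int_mat_inv_unique:
  assumes g: "g \<in> Sp n" and X: "X \<in> carrier_mat (2*n) (2*n)" and Xg: "X * g = 1\<^sub>m (2*n)"
  shows "int_mat_inv g = X"
proof -
  note inv = int_mat_inv_Sp[OF g]
  have "X = X * (g * int_mat_inv g)" using inv X by simp
  also have "\<dots> = (X * g) * int_mat_inv g"
    using inv X Sp_carrier[OF g] by (simp add: assoc_mult_sq_mat[where k="2*n"])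
  finally show ?thesis using Xg inv by simp
qed

lemma Gamma_l_2_int_mat_inv:
  assumes "u \<in> Gamma_l_2 n"
  shows "int_mat_inv u \<in> Gamma_l_2 n"
proof -
  have u: "u \<in> Gamma_princ n 2" "tau n u = u" using assms unfolding Gamma_l_2_iff by auto
  have uS: "u \<in> Sp n" and uc: "u \<in> carrier_mat (2*n) (2*n)" using u Gamma_princ_iff Sp_carrier by auto
  note inv = int_mat_inv_Sp[OF uS]
  have "tau n (int_mat_inv u) * u = 1\<^sub>m (2*n)"
    using tau_mult[OF inv(1) uc] u(2) inv(3) tau_one by simp
  then have "int_mat_inv u = tau n (int_mat_inv u)"
    by (rule int_mat_inv_unique[OF uS tau_carrier[OF inv(1)]])
  then show ?thesis using Gamma_princ_int_mat_inv[OF u(1)] unfolding Gamma_l_2_iff by simp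
qed

lemma self_mem_dcoset: "g \<in> carrier_mat (2*n) (2*n) \<Longrightarrow> g \<in> dcoset n N g"
  unfolding dcoset_def using one_Gamma_princ one_Gamma_l_2
  by (intro CollectI exI[of _ "1\<^sub>m (2*n)"]) auto

lemma dcoset_mult_subset:
  assumes g: "g \<in> carrier_mat (2*n) (2*n)" and a: "a \<in> Gamma_princ n N" and u: "u \<in> Gamma_l_2 n"
  shows "dcoset n N (a * g * u) \<subseteq> dcoset n N g"
proof
  fix x assume "x \<in> dcoset n N (a * g * u)"
  then obtain b v where x: "x = b * (a * g * u) * v" and b: "b \<in> Gamma_princ n N" and v: "v \<in> Gamma_l_2 n"
    unfolding dcoset_def by blast
  have "x = (b * a) * g * (u * v)"
    unfolding x using g Gamma_princ_carrier[OF a] Gamma_princ_carrier[OF b] Gamma_l_2_carrier[OF u]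
      Gamma_l_2_carrier[OF v]
    by (simp add: assoc_mult_sq_mat[where k="2*n"])
  then show "x \<in> dcoset n N g"
    unfolding dcoset_def using Gamma_princ_mult[OF b a] Gamma_l_2_mult[OF u v] by blast
qed

lemma dcoset_mult:
  assumes g: "g \<in> carrier_mat (2*n) (2*n)" and a: "a \<in> Gamma_princ n N" and u: "u \<in> Gamma_l_2 n"
  shows "dcoset n N (a * g * u) = dcoset n N g"
proof
  show "dcoset n N (a * g * u) \<subseteq> dcoset n N g" by (rule dcoset_mult_subset[OF g a u])
  have aS: "a \<in> Sp n" and uS: "u \<in> Sp n" using a u Gamma_l_2_Sp unfolding Gamma_princ_iff by auto
  note inv_a = int_mat_inv_Sp[OF aS] and inv_u = int_mat_inv_Sp[OF uS]
  have ac: "a \<in> carrier_mat (2*n) (2*n)" and uc: "u \<in> carrier_mat (2*n) (2*n)"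
    using a u by (auto intro: Gamma_princ_carrier Gamma_l_2_carrier)
  have "int_mat_inv a * (a * g * u) * int_mat_inv u = int_mat_inv a * a * g * u * int_mat_inv u"
    using g ac uc inv_a(1) inv_u(1) by (simp add: assoc_mult_sq_mat[where k="2*n"])
  also have "\<dots> = g * (u * int_mat_inv u)"
    using g uc inv_a inv_u by (simp add: assoc_mult_sq_mat[where k="2*n"])
  also have "\<dots> = g" using g inv_u by simp
  finally have "dcoset n N g = dcoset n N (int_mat_inv a * (a * g * u) * int_mat_inv u)" by simp
  also have "\<dots> \<subseteq> dcoset n N (a * g * u)"
    using g ac uc Gamma_princ_int_mat_inv[OF a] Gamma_l_2_int_mat_inv[OF u]
    by (intro dcoset_mult_subset) auto
  finally show "dcoset n N g \<subseteq> dcoset n N (a * g * u)" .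
qed

lemma dcoset_eq_iff:
  assumes "g \<in> carrier_mat (2*n) (2*n)" "g' \<in> carrier_mat (2*n) (2*n)"
  shows "dcoset n N g = dcoset n N g' \<longleftrightarrow> g' \<in> dcoset n N g"
proof
  show "dcoset n N g = dcoset n N g' \<Longrightarrow> g' \<in> dcoset n N g" using self_mem_dcoset[OF assms(2)] by simp
next
  assume "g' \<in> dcoset n N g"
  then obtain a u where "g' = a * g * u" "a \<in> Gamma_princ n N" "u \<in> Gamma_l_2 n"
    unfolding dcoset_def by blast
  then show "dcoset n N g = dcoset n N g'" using dcoset_mult assms(1) by simp
qed

section \<open>Cohomology classes\<close>

lemma cocycles_carrier: "x \<in> cocycles n N \<Longrightarrow> x \<in> carrier_mat (2*n) (2*n)"
  unfolding cocycles_def using Gamma_princ_carrier by auto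

lemma cohomologous_sym:
  assumes "(x, y) \<in> cohomologous n N"
  shows "(y, x) \<in> cohomologous n N"
proof -
  obtain h h' where x: "x \<in> cocycles n N" and y: "y \<in> cocycles n N" and h: "h \<in> Gamma_princ n N"
    and h'c: "h' \<in> carrier_mat (2*n) (2*n)" and hh': "h * h' = 1\<^sub>m (2*n)" and h'h: "h' * h = 1\<^sub>m (2*n)"
    and y_eq: "y = tau n h * x * h'" using assms unfolding cohomologous_def by blast
  have hc: "h \<in> carrier_mat (2*n) (2*n)" using h Gamma_princ_carrier by auto
  have "tau n h' * y * h = (tau n h' * tau n h) * x * (h' * h)"
    unfolding y_eq using hc h'c cocycles_carrier[OF x] by (simp add: assoc_mult_sq_mat[where k="2*n"])
  also have "\<dots> = x" using tau_mult[OF h'c hc, symmetric] h'h tau_one cocycles_carrier[OF x] by simp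
  finally show ?thesis
    unfolding cohomologous_def using x y Gamma_princ_inverse[OF h h'c hh' h'h] hc hh' h'h
    by (intro CollectI case_prodI conjI exI[of _ h'] exI[of _ h]) auto
qed

lemma cohomologous_trans:
  assumes "(x, y) \<in> cohomologous n N" "(y, z) \<in> cohomologous n N"
  shows "(x, z) \<in> cohomologous n N"
proof -
  obtain h h' k k' where x: "x \<in> cocycles n N" and z: "z \<in> cocycles n N"
    and h: "h \<in> Gamma_princ n N" and h'c: "h' \<in> carrier_mat (2*n) (2*n)"
    and hh': "h * h' = 1\<^sub>m (2*n)" and h'h: "h' * h = 1\<^sub>m (2*n)" and y_eq: "y = tau n h * x * h'"
    and k: "k \<in> Gamma_princ n N" and k'c: "k' \<in> carrier_mat (2*n) (2*n)"
    and kk': "k * k' = 1\<^sub>m (2*n)" and k'k: "k' * k = 1\<^sub>m (2*n)" and z_eq: "z = tau n k * y * k'"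
    using assms unfolding cohomologous_def by blast
  have hc: "h \<in> carrier_mat (2*n) (2*n)" and kc: "k \<in> carrier_mat (2*n) (2*n)"
    using h k Gamma_princ_carrier by auto
  have "z = (tau n k * tau n h) * x * (h' * k')"
    unfolding z_eq y_eq using hc h'c kc k'c cocycles_carrier[OF x] by (simp add: assoc_mult_sq_mat[where k="2*n"])
  then have "z = tau n (k * h) * x * (h' * k')" using tau_mult[OF kc hc] by simp
  moreover have "(k * h) * (h' * k') = k * (h * h') * k'" "(h' * k') * (k * h) = h' * (k' * k) * h"
    using hc h'c kc k'c by (simp_all add: assoc_mult_sq_mat[where k="2*n"])
  then have "(k * h) * (h' * k') = 1\<^sub>m (2*n)" "(h' * k') * (k * h) = 1\<^sub>m (2*n)"
    using hh' kk' h'h k'k kc h'c by simp_all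
  ultimately show ?thesis
    unfolding cohomologous_def using x z Gamma_princ_mult[OF k h] h'c k'c
    by (intro CollectI case_prodI conjI exI[of _ "k * h"] exI[of _ "h' * k'"]) auto
qed

lemma cohomologous_equiv: "equiv (cocycles n N) (cohomologous n N)"
proof (rule equivI)
  show "cohomologous n N \<subseteq> cocycles n N \<times> cocycles n N" unfolding cohomologous_def by auto
  show "refl_on (cocycles n N) (cohomologous n N)"
  proof (rule refl_onI)
    fix x assume x: "x \<in> cocycles n N"
    then have "x = tau n (1\<^sub>m (2*n)) * x * 1\<^sub>m (2*n)" using cocycles_carrier[OF x] tau_one by simp
    then show "(x, x) \<in> cohomologous n N" unfolding cohomologous_def using x one_Gamma_princ
      by (intro CollectI case_prodI conjI exI[of _ "1\<^sub>m (2*n)"]) auto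
  qed
  show "sym (cohomologous n N)" by (rule symI) (rule cohomologous_sym)
  show "trans (cohomologous n N)" by (rule transI) (rule cohomologous_trans)
qed

definition coboundary :: "nat \<Rightarrow> int mat \<Rightarrow> int mat" where
  "coboundary n g = tau n g * int_mat_inv g"

lemma coboundary_carrier: "g \<in> Sp n \<Longrightarrow> coboundary n g \<in> carrier_mat (2*n) (2*n)"
  unfolding coboundary_def using int_mat_inv_Sp Sp_carrier by auto

lemma coboundary_mult_self:
  assumes g: "g \<in> Sp n"
  shows "coboundary n g * g = tau n g"
proof -
  note inv = int_mat_inv_Sp[OF g]
  have "coboundary n g * g = tau n g * (int_mat_inv g * g)"
    unfolding coboundary_def using inv Sp_carrier[OF g] by (simp add: assoc_mult_sq_mat[where k="2*n"])
  then show ?thesis using inv Sp_carrier[OF g] by simp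
qed

lemma coboundary_unique:
  assumes g: "g \<in> Sp n" and X: "X \<in> carrier_mat (2*n) (2*n)" and Xg: "X * g = tau n g"
  shows "X = coboundary n g"
proof -
  note inv = int_mat_inv_Sp[OF g]
  have "X = X * (g * int_mat_inv g)" using inv X by simp
  also have "\<dots> = (X * g) * int_mat_inv g"
    using inv X Sp_carrier[OF g] by (simp add: assoc_mult_sq_mat[where k="2*n"])
  finally show ?thesis unfolding coboundary_def Xg .
qed

lemma coboundary_cocycle:
  assumes g: "g \<in> Gamma_2m_2 n m"
  shows "coboundary n g \<in> cocycles n (4*m)"
proof -
  have gS: "g \<in> Sp n" and g_tau: "cong_mat (4*m) (tau n g) g" using g Gamma_2m_2_iff by auto
  have gc: "g \<in> carrier_mat (2*n) (2*n)" using gS Sp_carrier by auto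
  note inv = int_mat_inv_Sp[OF gS]
  have "coboundary n g \<in> Sp n" unfolding coboundary_def by (rule Sp_mult[OF tau_Sp[OF gS] inv(4)])
  moreover have "cong_mat (4*m) (tau n g * int_mat_inv g) (g * int_mat_inv g)"
    by (rule cong_mat_mult[OF g_tau cong_mat_refl]) (use gc inv in auto)
  then have "cong_mat (4*m) (coboundary n g) (1\<^sub>m (2*n))" unfolding coboundary_def using inv by simp
  moreover have "coboundary n g * tau n (coboundary n g) = tau n g * (int_mat_inv g * g) * tau n (int_mat_inv g)"
    unfolding coboundary_def using gc inv(1)
    by (simp add: tau_mult tau_tau assoc_mult_sq_mat[where k="2*n"])
  then have "coboundary n g * tau n (coboundary n g) = 1\<^sub>m (2*n)"
    using gc inv tau_mult[OF gc inv(1)] tau_one by simp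
  ultimately show ?thesis unfolding cocycles_def Gamma_princ_iff by auto
qed

lemma cohomologous_coboundary_if_dcoset:
  assumes g1: "g1 \<in> Gamma_2m_2 n m" and g2: "g2 \<in> Gamma_2m_2 n m" and g2_dcoset: "g2 \<in> dcoset n (4*m) g1"
  shows "(coboundary n g1, coboundary n g2) \<in> cohomologous n (4*m)"
proof -
  obtain a u where a: "a \<in> Gamma_princ n (4*m)" and u: "u \<in> Gamma_l_2 n" and g2_eq: "g2 = a * g1 * u"
    using g2_dcoset unfolding dcoset_def by blast
  have g1S: "g1 \<in> Sp n" and g2S: "g2 \<in> Sp n" using g1 g2 Gamma_2m_2_iff by auto
  have g1c: "g1 \<in> carrier_mat (2*n) (2*n)" using g1S Sp_carrier by auto
  have ac: "a \<in> carrier_mat (2*n) (2*n)" and uc: "u \<in> carrier_mat (2*n) (2*n)"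
    using a u Gamma_princ_carrier Gamma_l_2_carrier by auto
  have aS: "a \<in> Sp n" and tau_u: "tau n u = u" using a u Gamma_princ_iff Gamma_l_2_iff by auto
  note inv_a = int_mat_inv_Sp[OF aS]
  note cob1 = coboundary_carrier[OF g1S] coboundary_mult_self[OF g1S]
  let ?X = "tau n a * coboundary n g1 * int_mat_inv a"
  have "?X * g2 = tau n a * coboundary n g1 * (int_mat_inv a * a) * g1 * u"
    unfolding g2_eq using ac cob1 inv_a(1) g1c uc by (simp add: assoc_mult_sq_mat[where k="2*n"])
  also have "\<dots> = tau n a * (coboundary n g1 * g1) * u"
    using inv_a g1c uc cob1(1) ac by (simp add: assoc_mult_sq_mat[where k="2*n"])
  also have "\<dots> = tau n a * tau n g1 * tau n u" using cob1(2) tau_u by simp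
  also have "\<dots> = tau n g2" unfolding g2_eq using ac g1c uc by (simp add: tau_mult assoc_mult_sq_mat[where k="2*n"])
  finally have "?X = coboundary n g2" by (intro coboundary_unique[OF g2S]) (use ac cob1 inv_a in auto)
  then show ?thesis
    unfolding cohomologous_def using coboundary_cocycle[OF g1] coboundary_cocycle[OF g2] a inv_a
    by (intro CollectI case_prodI conjI exI[of _ a] exI[of _ "int_mat_inv a"]) auto
qed

lemma dcoset_if_cohomologous_coboundary:
  assumes g1: "g1 \<in> Gamma_2m_2 n m" and g2: "g2 \<in> Gamma_2m_2 n m"
    and coh: "(coboundary n g1, coboundary n g2) \<in> cohomologous n (4*m)"
  shows "g2 \<in> dcoset n (4*m) g1"
proof -
  obtain h h' where h: "h \<in> Gamma_princ n (4*m)" and h'c: "h' \<in> carrier_mat (2*n) (2*n)"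
    and hh': "h * h' = 1\<^sub>m (2*n)" and h'h: "h' * h = 1\<^sub>m (2*n)"
    and cob2: "coboundary n g2 = tau n h * coboundary n g1 * h'"
    using coh unfolding cohomologous_def by blast
  have g1S: "g1 \<in> Sp n" and g2S: "g2 \<in> Sp n" using g1 g2 Gamma_2m_2_iff by auto
  have g1c: "g1 \<in> carrier_mat (2*n) (2*n)" and g2c: "g2 \<in> carrier_mat (2*n) (2*n)"
    and hc: "h \<in> carrier_mat (2*n) (2*n)" using g1S g2S h Sp_carrier Gamma_princ_carrier by auto
  have h': "h' \<in> Gamma_princ n (4*m)" by (rule Gamma_princ_inverse[OF h h'c hh' h'h])
  note inv1 = int_mat_inv_Sp[OF g1S]
  note cob1 = coboundary_carrier[OF g1S] coboundary_mult_self[OF g1S]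
  define u where "u = int_mat_inv g1 * h' * g2"
  have uc: "u \<in> carrier_mat (2*n) (2*n)" unfolding u_def using inv1 h'c g2c by auto
  have "g1 * u = (g1 * int_mat_inv g1) * h' * g2"
    unfolding u_def using inv1(1) h'c g1c g2c by (simp add: assoc_mult_sq_mat[where k="2*n"])
  then have g1_u: "g1 * u = h' * g2" using inv1(2) h'c by simp
  have "h * g1 * u = (h * h') * g2"
    using g1_u hc g1c uc h'c g2c by (simp add: assoc_mult_sq_mat[where k="2*n"])
  then have g2_eq: "g2 = h * g1 * u" using hh' g2c by simp
  have tau_g2: "tau n g2 = tau n (h * g1) * u"
  proof -
    have "tau n g2 = tau n h * coboundary n g1 * (h' * g2)"
      using coboundary_mult_self[OF g2S] cob2 hc cob1 h'c g2c by (simp add: assoc_mult_sq_mat[where k="2*n"])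
    also have "\<dots> = tau n h * (coboundary n g1 * g1) * u"
      unfolding g1_u[symmetric] using hc cob1(1) g1c uc by (simp add: assoc_mult_sq_mat[where k="2*n"])
    finally show ?thesis using cob1(2) tau_mult[OF hc g1c] by simp
  qed
  have "h * g1 \<in> Sp n" using Sp_mult h g1S unfolding Gamma_princ_iff by blast
  then have "tau n u = u" using tau_g2 g2_eq uc by (intro tau_fixed_if_tau_mult) auto
  moreover have "h' \<in> Gamma_princ n 2" using Gamma_princ_dvd[OF h'] by simp
  then have "u \<in> Gamma_princ n 2"
    unfolding u_def by (intro Gamma_princ_mult Gamma_princ_int_mat_inv) (use g1 g2 Gamma_2m_2_Gamma_princ_2 in auto)
  ultimately have "u \<in> Gamma_l_2 n" unfolding Gamma_l_2_iff by blast
  then show ?thesis unfolding dcoset_def using g2_eq h by blast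
qed

lemma cohomologous_coboundary_iff:
  assumes "g1 \<in> Gamma_2m_2 n m" "g2 \<in> Gamma_2m_2 n m"
  shows "(coboundary n g1, coboundary n g2) \<in> cohomologous n (4*m) \<longleftrightarrow> g2 \<in> dcoset n (4*m) g1"
  using assms dcoset_if_cohomologous_coboundary cohomologous_coboundary_if_dcoset by blast

section \<open>Submodules of \<open>\<int>\<^sup>k\<close> modulo 2\<close>

lemma zero_if_all_powers_of_2_dvd:
  assumes "\<forall>t. (2::int) ^ t dvd x"
  shows "x = 0"
proof (rule ccontr)
  assume "x \<noteq> 0"
  then have "\<bar>(2::int) ^ nat \<bar>x\<bar>\<bar> \<le> \<bar>x\<bar>" using assms dvd_imp_le_int by blast
  moreover have "int (nat \<bar>x\<bar>) < 2 ^ nat \<bar>x\<bar>"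
    using less_exp[of "nat \<bar>x\<bar>"] by (metis of_nat_less_iff of_nat_numeral of_nat_power)
  ultimately show False by simp
qed

lemma zero_by_halving:
  assumes halve: "\<And>f. P f \<Longrightarrow> (\<forall>i<k. even (f i)) \<and> P (\<lambda>i. f i div 2)" and "P f"
  shows "\<forall>i<k. f i = (0::int)"
proof -
  have "\<forall>f. P f \<longrightarrow> (\<forall>i<k. (2::int) ^ t dvd f i)" for t
  proof (induction t)
    case (Suc t)
    show ?case
    proof (intro allI impI)
      fix f i assume "P f" "i < k"
      then have "even (f i)" "2 ^ t dvd f i div 2" using halve Suc by blast+
      then show "2 ^ Suc t dvd f i" by (metis dvd_mult_div_cancel mult_dvd_mono power_Suc dvd_refl)
    qed
  qed simp
  then show ?thesis using assms(2) zero_if_all_powers_of_2_dvd by blast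
qed

lemma unit_vectors_mod_2_independent:
  assumes b: "\<forall>j<(k::nat). \<forall>i. [b j i = (if i = j then 1 else 0)] (mod 2)"
    and y: "\<forall>i<k. (\<Sum>j<k. y j * b j i) = (0::int)"
  shows "\<forall>j<k. y j = 0"
proof (rule zero_by_halving[where P = "\<lambda>y. \<forall>i<k. (\<Sum>j<k. y j * b j i) = 0"])
  fix y assume y: "\<forall>i<k. (\<Sum>j<k. y j * b j i) = (0::int)"
  have even: "\<forall>i<k. even (y i)"
  proof (intro allI impI)
    fix i assume i: "i < k"
    have "[(\<Sum>j<k. y j * b j i) = (\<Sum>j<k. y j * (if i = j then 1 else 0))] (mod 2)"
      using b by (intro cong_sum cong_mult cong_refl) auto
    then have "[0 = y i] (mod 2)" using y i by (simp add: if_distrib[of "\<lambda>x. _ * x"] cong: if_cong)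
    then show "even (y i)" by (metis cong_0_iff cong_sym)
  qed
  moreover have "(\<Sum>j<k. y j * b j i) = 2 * (\<Sum>j<k. (y j div 2) * b j i)" for i
    unfolding sum_distrib_left using even by (intro sum.cong) auto
  ultimately show "(\<forall>i<k. even (y i)) \<and> (\<forall>i<k. (\<Sum>j<k. (y j div 2) * b j i) = 0)"
    using y by simp
qed (use y in auto)

definition int_submodule :: "(nat \<Rightarrow> int) set \<Rightarrow> bool" where
  "int_submodule L \<longleftrightarrow> (\<forall>u\<in>L. \<forall>v\<in>L. (\<lambda>i. u i - v i) \<in> L) \<and> (\<forall>v\<in>L. \<forall>c. (\<lambda>i. c * v i) \<in> L)"

lemma int_submodule_diff_smult:
  "int_submodule L \<Longrightarrow> u \<in> L \<Longrightarrow> v \<in> L \<Longrightarrow> (\<lambda>i. u i - c * v i) \<in> L"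
  unfolding int_submodule_def by fast

lemma int_submodule_coordinate_generator:
  assumes L: "int_submodule L" and v: "v \<in> L" "v k \<noteq> 0"
  shows "\<exists>w\<in>L. w k > 0 \<and> (\<forall>u\<in>L. w k dvd u k)"
proof -
  define S where "S = {d::nat. d > 0 \<and> (\<exists>v\<in>L. v k = int d)}"
  obtain v' where "v' \<in> L" "v' k = \<bar>v k\<bar>"
  proof (cases "v k \<ge> 0")
    case False
    have "(\<lambda>i. (-1) * v i) \<in> L" using L v unfolding int_submodule_def by blast
    then show ?thesis using that False by simp
  qed (use v in auto)
  then have "nat \<bar>v k\<bar> \<in> S" using v unfolding S_def by auto
  then have "(LEAST d. d \<in> S) \<in> S" by (rule LeastI)
  then obtain w where w: "w \<in> L" "w k > 0" "w k = int (LEAST d. d \<in> S)" unfolding S_def by auto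
  have least: "w k \<le> int d" if "d \<in> S" for d using w(3) Least_le[of "\<lambda>d. d \<in> S", OF that] by simp
  have "w k dvd u k" if u: "u \<in> L" for u
  proof (rule ccontr)
    assume "\<not> w k dvd u k"
    moreover have "0 \<le> u k mod w k" "u k mod w k < w k" using w(2) by simp_all
    ultimately have r: "0 < u k mod w k" "u k mod w k < w k" by (auto simp: dvd_eq_mod_eq_0)
    have "(\<lambda>i. u i - (u k div w k) * w i) \<in> L" by (rule int_submodule_diff_smult[OF L u w(1)])
    moreover have "u k - (u k div w k) * w k = u k mod w k" by (simp add: minus_div_mult_eq_mod)
    ultimately have "nat (u k mod w k) \<in> S" unfolding S_def using r by force
    then show False using least r by fastforce
  qed
  then show ?thesis using w by blast
qed

lemma cong_diff_even_mult: "even s \<Longrightarrow> [x - s * y = x] (mod (2::int))"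
  unfolding cong_iff_dvd_diff by simp

lemma int_submodule_unit_generator:
  assumes L: "int_submodule L" and v0: "v0 \<in> L" "\<forall>j. [v0 j = (if j = k then 1 else 0)] (mod 2)"
  shows "\<exists>w\<in>L. (\<forall>j. [w j = (if j = k then 1 else 0)] (mod 2)) \<and> (\<forall>u\<in>L. w k dvd u k)"
proof -
  have "2 dvd v0 k - 1" using v0(2)[rule_format, of k] unfolding cong_iff_dvd_diff by simp
  then have v0_odd: "odd (v0 k)" by presburger
  then have "v0 k \<noteq> 0" by presburger
  then obtain w where w: "w \<in> L" and w_dvd: "\<And>u. u \<in> L \<Longrightarrow> w k dvd u k"
    using int_submodule_coordinate_generator[OF L v0(1)] by blast
  obtain t where t: "v0 k = w k * t" using w_dvd[OF v0(1)] by (auto elim: dvdE)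
  then have t_odd: "odd t" using v0_odd by auto
  \<comment> \<open>correct \<open>v0\<close> by an even multiple of \<open>w\<close> so that its \<open>k\<close>-th coordinate becomes the generator \<open>w k\<close>\<close>
  define w' where "w' = (\<lambda>i. v0 i - (t - 1) * w i)"
  have w'L: "w' \<in> L" unfolding w'_def by (rule int_submodule_diff_smult[OF L v0(1) w])
  have "w' k = w k" unfolding w'_def using t by (simp add: algebra_simps)
  then have w'_dvd: "\<forall>u\<in>L. w' k dvd u k" using w_dvd by simp
  have "\<forall>j. [w' j = (if j = k then 1 else 0)] (mod 2)"
  proof
    fix j
    have "[w' j = v0 j] (mod 2)" unfolding w'_def by (rule cong_diff_even_mult) (use t_odd in simp)
    then show "[w' j = (if j = k then 1 else 0)] (mod 2)" using v0(2) by (metis cong_trans)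
  qed
  then show ?thesis using w'L w'_dvd by blast
qed

lemma int_submodule_eliminate_coordinate:
  assumes "int_submodule L" "w \<in> L" "u \<in> L" "w k dvd u k"
  shows "\<exists>s. u k = s * w k \<and> (\<lambda>i. u i - s * w i) \<in> {v \<in> L. v k = 0}"
  using assms int_submodule_diff_smult[OF assms(1,3,2)] by (auto elim!: dvdE simp: mult.commute)

lemma int_submodule_coordinate_kernel:
  assumes L: "int_submodule L" and supp: "\<forall>v\<in>L. \<forall>i\<ge>Suc k. v i = 0"
    and units: "\<forall>i<k. \<exists>v\<in>L. \<forall>j. [v j = (if j = i then 1 else 0)] (mod 2)"
    and w: "w \<in> L" "odd (w k)" "\<forall>u\<in>L. w k dvd u k"
  shows "int_submodule {v \<in> L. v k = 0}" "\<forall>v\<in>{v \<in> L. v k = 0}. \<forall>i\<ge>k. v i = 0"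
    "\<forall>i<k. \<exists>v\<in>{v \<in> L. v k = 0}. \<forall>j. [v j = (if j = i then 1 else 0)] (mod 2)"
proof -
  show "int_submodule {v \<in> L. v k = 0}" using L unfolding int_submodule_def by auto
  show "\<forall>v\<in>{v \<in> L. v k = 0}. \<forall>i\<ge>k. v i = 0"
    using supp by (metis (mono_tags, lifting) Suc_leI le_neq_implies_less mem_Collect_eq)
  show "\<forall>i<k. \<exists>v\<in>{v \<in> L. v k = 0}. \<forall>j. [v j = (if j = i then 1 else 0)] (mod 2)"
  proof (intro allI impI)
    fix i assume i: "i < k"
    obtain v where v: "v \<in> L" "\<forall>j. [v j = (if j = i then 1 else 0)] (mod 2)" using units i by blast
    obtain s where s: "v k = s * w k" "(\<lambda>j. v j - s * w j) \<in> {v \<in> L. v k = 0}"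
      using int_submodule_eliminate_coordinate[OF L w(1) v(1)] w(3) v(1) by blast
    have "even (v k)" using v(2)[rule_format, of k] i by (simp add: cong_0_iff)
    then have "even s" using s(1) w(2) by simp
    then have "\<forall>j. [v j - s * w j = (if j = i then 1 else 0)] (mod 2)"
      using v(2) cong_diff_even_mult by (metis cong_trans)
    then show "\<exists>v\<in>{v \<in> L. v k = 0}. \<forall>j. [v j = (if j = i then 1 else 0)] (mod 2)"
      using s(2) by (intro bexI[of _ "\<lambda>j. v j - s * w j"]) auto
  qed
qed

lemma int_submodule_basis_mod_2:
  assumes "int_submodule L" "\<forall>v\<in>L. \<forall>i\<ge>k. v i = 0"
    "\<forall>i<k. \<exists>v\<in>L. \<forall>j. [v j = (if j = i then 1 else 0)] (mod 2)"
  shows "\<exists>b. (\<forall>j<k. b j \<in> L) \<and> (\<forall>j<k. \<forall>i. [b j i = (if i = j then 1 else 0)] (mod 2)) \<and>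
     (\<forall>u\<in>L. \<exists>y. \<forall>i. u i = (\<Sum>j<k. y j * b j i))"
  using assms
proof (induction k arbitrary: L)
  case 0
  then show ?case by auto
next
  case (Suc k)
  note L = Suc.prems(1)
  obtain v0 where "v0 \<in> L" "\<forall>j. [v0 j = (if j = k then 1 else 0)] (mod 2)" using Suc.prems(3) by auto
  then obtain w where wL: "w \<in> L" and w_mod_2: "\<forall>j. [w j = (if j = k then 1 else 0)] (mod 2)"
    and w_dvd: "\<forall>u\<in>L. w k dvd u k"
    using int_submodule_unit_generator[OF L] by blast
  have "2 dvd w k - 1" using w_mod_2[rule_format, of k] unfolding cong_iff_dvd_diff by simp
  then have w_odd: "odd (w k)" by presburger
  have "\<forall>i<k. \<exists>v\<in>L. \<forall>j. [v j = (if j = i then 1 else 0)] (mod 2)" using Suc.prems(3) by auto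
  note kernel = int_submodule_coordinate_kernel[OF L Suc.prems(2) this wL w_odd w_dvd]
  obtain b' where b'L: "\<forall>j<k. b' j \<in> {v \<in> L. v k = 0}"
    and b'_mod_2: "\<forall>j<k. \<forall>i. [b' j i = (if i = j then 1 else 0)] (mod 2)"
    and b'_span: "\<forall>u\<in>{v \<in> L. v k = 0}. \<exists>y. \<forall>i. u i = (\<Sum>j<k. y j * b' j i)"
    using Suc.IH[OF kernel] by blast
  define b where "b = b'(k := w)"
  show ?case
  proof (intro exI[of _ b] conjI)
    show "\<forall>j<Suc k. b j \<in> L" using b'L wL unfolding b_def by (auto simp: less_Suc_eq)
    show "\<forall>j<Suc k. \<forall>i. [b j i = (if i = j then 1 else 0)] (mod 2)"
      using b'_mod_2 w_mod_2 unfolding b_def by (auto simp: less_Suc_eq)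
    show "\<forall>u\<in>L. \<exists>y. \<forall>i. u i = (\<Sum>j<Suc k. y j * b j i)"
    proof
      fix u assume u: "u \<in> L"
      obtain s where "(\<lambda>i. u i - s * w i) \<in> {v \<in> L. v k = 0}"
        using int_submodule_eliminate_coordinate[OF L wL u] w_dvd u by blast
      from b'_span[rule_format, OF this]
      obtain y where y: "\<forall>i. u i - s * w i = (\<Sum>j<k. y j * b' j i)" by auto
      have "u i = (\<Sum>j<Suc k. (y(k := s)) j * b j i)" for i
        using y[rule_format, of i] unfolding b_def by (simp add: lessThan_Suc algebra_simps)
      then show "\<exists>y. \<forall>i. u i = (\<Sum>j<Suc k. y j * b j i)" by blast
    qed
  qed
qed

section \<open>The symplectic form and symplectic bases\<close>

definition symp_form :: "nat \<Rightarrow> int vec \<Rightarrow> int vec \<Rightarrow> int" where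
  "symp_form n x y = x \<bullet> (Jmat n *\<^sub>v y)"

lemma symp_form_antisym:
  assumes x: "x \<in> carrier_vec (2*n)" and y: "y \<in> carrier_vec (2*n)"
  shows "symp_form n y x = - symp_form n x y"
proof -
  have "symp_form n y x = (transpose_mat (Jmat n) *\<^sub>v y) \<bullet> x"
    unfolding symp_form_def by (rule transpose_vec_mult_scalar[symmetric, OF Jmat_carrier x y])
  also have "\<dots> = - (x \<bullet> (Jmat n *\<^sub>v y))"
    unfolding transpose_Jmat
    using x y comm_scalar_prod[OF mult_mat_vec_carrier[OF Jmat_carrier y] x] by simp
  finally show ?thesis unfolding symp_form_def .
qed

lemma index_transpose_Jmat_mult:
  assumes "g \<in> carrier_mat (2*n) k" "i < k" "j < k"
  shows "(transpose_mat g * Jmat n * g) $$ (i,j) = symp_form n (col g i) (col g j)"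
proof -
  have "(transpose_mat g * Jmat n * g) $$ (i,j) = (transpose_mat g * (Jmat n * g)) $$ (i,j)"
    using assms by (simp add: assoc_mult_mat[of _ k "2*n" _ "2*n" _ k])
  also have "col (Jmat n * g) j = Jmat n *\<^sub>v col g j" by (rule col_mult2[OF Jmat_carrier assms(1,3)])
  then have "(transpose_mat g * (Jmat n * g)) $$ (i,j) = symp_form n (col g i) (col g j)"
    unfolding symp_form_def using assms by simp
  finally show ?thesis .
qed

lemma Sp_lower_right_mod_2:
  assumes g: "g \<in> Sp n" and left: "\<forall>i<2*n. \<forall>j<n. [g $$ (i,j) = 1\<^sub>m (2*n) $$ (i,j)] (mod 2)"
    and i: "i < n" and j: "j < n"
  shows "[g $$ (i+n, j+n) = (if i = j then 1 else 0)] (mod 2)"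
proof -
  have gc: "g \<in> carrier_mat (2*n) (2*n)" using g Sp_carrier by auto
  let ?y = "col g (j+n)"
  have y: "?y \<in> carrier_vec (2*n)" using gc by (simp add: carrier_vecI)
  have "symp_form n (col g i) ?y = (transpose_mat g * Jmat n * g) $$ (i, j+n)"
    using gc i j by (subst index_transpose_Jmat_mult[of _ _ "2*n"]) auto
  also have "\<dots> = (if i = j then 1 else 0)" using g i j unfolding Sp_def by (simp add: index_Jmat)
  finally have "symp_form n (col g i) ?y = (if i = j then 1 else 0)" .
  moreover have "[col g i \<bullet> (Jmat n *\<^sub>v ?y) = unit_vec (2*n) i \<bullet> (Jmat n *\<^sub>v ?y)] (mod 2)"
    unfolding scalar_prod_def using left gc i by (auto intro!: cong_sum cong_mult)
  moreover have "unit_vec (2*n) i \<bullet> (Jmat n *\<^sub>v ?y) = g $$ (i+n, j+n)"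
    using i j gc y by (simp add: Jmat_mult_vec)
  ultimately show ?thesis unfolding symp_form_def by (metis cong_sym)
qed

lemma Sp_cong_one_mod_2:
  assumes g: "g \<in> Sp n" and tau_g: "cong_mat 4 (tau n g) g"
    and upper_left: "\<forall>i<n. \<forall>j<n. [g $$ (i,j) = (if i = j then 1 else 0)] (mod 2)"
  shows "cong_mat 2 g (1\<^sub>m (2*n))"
proof -
  have gc: "g \<in> carrier_mat (2*n) (2*n)" using g Sp_carrier by auto
  \<comment> \<open>\<open>\<tau> g \<equiv> g\<close> mod 4 means that the off-diagonal blocks of \<open>g\<close> are even\<close>
  have off_diag: "[g $$ (i,j) = 0] (mod 2)" if "i < 2*n" "j < 2*n" "(i < n) \<noteq> (j < n)" for i j
    using cong_tau_iff[OF gc, of 2] tau_g that by simp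
  have left: "\<forall>i<2*n. \<forall>j<n. [g $$ (i,j) = 1\<^sub>m (2*n) $$ (i,j)] (mod 2)"
  proof (intro allI impI)
    fix i j assume ij: "i < 2*n" "j < n"
    show "[g $$ (i,j) = 1\<^sub>m (2*n) $$ (i,j)] (mod 2)"
    proof (cases "i < n")
      case True
      then show ?thesis using upper_left ij by auto
    next
      case False
      then show ?thesis using off_diag[of i j] ij by auto
    qed
  qed
  show ?thesis unfolding cong_mat_def
  proof (intro conjI allI impI)
    fix i j assume "i < dim_row g" "j < dim_col g"
    then have ij: "i < 2*n" "j < 2*n" using gc by auto
    consider "j < n" | "(i < n) \<noteq> (j < n)" | "n \<le> i" "n \<le> j" by linarith
    then show "[g $$ (i,j) = 1\<^sub>m (2*n) $$ (i,j)] (mod 2)"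
    proof cases
      case 3
      then obtain i' j' where "i = i' + n" "j = j' + n" "i' < n" "j' < n"
        using ij by (metis add.commute le_add_diff_inverse less_diff_conv2 mult_2)
      then show ?thesis using Sp_lower_right_mod_2[OF g left] by auto
    qed (use left ij off_diag in auto)
  qed (use gc in auto)
qed

definition block_cols :: "nat \<Rightarrow> (nat \<Rightarrow> int vec) \<Rightarrow> (nat \<Rightarrow> int vec) \<Rightarrow> int mat" where
  "block_cols n X Q = mat (2*n) (2*n) (\<lambda>(i,j). if j < n then X j $ i else Q (j - n) $ i)"

lemma block_cols_carrier[simp]: "block_cols n X Q \<in> carrier_mat (2*n) (2*n)"
  and block_cols_dims[simp]: "dim_row (block_cols n X Q) = 2*n" "dim_col (block_cols n X Q) = 2*n"
  unfolding block_cols_def by simp_all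

lemma col_block_cols:
  assumes "\<forall>j<n. X j \<in> carrier_vec (2*n)" "\<forall>j<n. Q j \<in> carrier_vec (2*n)" "j < 2*n"
  shows "col (block_cols n X Q) j = (if j < n then X j else Q (j - n))"
proof (cases "j < n")
  case False
  then have "Q (j - n) \<in> carrier_vec (2*n)" using assms by auto
  then show ?thesis using False assms(3) by (intro eq_vecI) (auto simp: block_cols_def)
qed (use assms in \<open>auto simp: block_cols_def intro!: eq_vecI\<close>)

lemma block_cols_Sp:
  assumes X: "\<forall>j<n. X j \<in> carrier_vec (2*n)" and Q: "\<forall>j<n. Q j \<in> carrier_vec (2*n)"
    and XX: "\<forall>i<n. \<forall>j<n. symp_form n (X i) (X j) = 0" and QQ: "\<forall>i<n. \<forall>j<n. symp_form n (Q i) (Q j) = 0"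
    and XQ: "\<forall>i<n. \<forall>j<n. symp_form n (X i) (Q j) = (if i = j then 1 else 0)"
  shows "block_cols n X Q \<in> Sp n"
proof -
  have "transpose_mat (block_cols n X Q) * Jmat n * block_cols n X Q = Jmat n"
  proof (rule eq_matI)
    fix i j assume "i < dim_row (Jmat n)" "j < dim_col (Jmat n)"
    then have ij: "i < 2*n" "j < 2*n" by auto
    have QX: "symp_form n (Q i) (X j) = - (if j = i then 1 else 0)" if "i < n" "j < n" for i j
      using symp_form_antisym[of "X j" n "Q i"] X Q XQ that by simp
    have "(transpose_mat (block_cols n X Q) * Jmat n * block_cols n X Q) $$ (i,j)
        = symp_form n (col (block_cols n X Q) i) (col (block_cols n X Q) j)"
      using ij by (subst index_transpose_Jmat_mult[of _ _ "2*n"]) auto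
    also have "\<dots> = Jmat n $$ (i,j)"
      using ij XX QQ XQ QX by (auto simp: col_block_cols[OF X Q] index_Jmat)
    finally show "(transpose_mat (block_cols n X Q) * Jmat n * block_cols n X Q) $$ (i,j) = Jmat n $$ (i,j)" .
  qed auto
  then show ?thesis unfolding Sp_def by simp
qed

section \<open>Anti-symplectic involutions congruent to the sign matrix\<close>

definition upper_part :: "nat \<Rightarrow> int vec \<Rightarrow> nat \<Rightarrow> int" where
  "upper_part n x i = (if i < n then x $ i else 0)"

locale antisymplectic_involution =
  fixes n :: nat and M :: "int mat"
  assumes M_carrier: "M \<in> carrier_mat (2*n) (2*n)"
    and M_involution: "M * M = 1\<^sub>m (2*n)"
    and M_antisymplectic: "transpose_mat M * Jmat n * M = - Jmat n"
    and M_cong_sign: "cong_mat 4 M (sign_mat n)"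
begin

definition proj :: "int mat" where
  "proj = mat (2*n) (2*n) (\<lambda>(i,j). ((1\<^sub>m (2*n) + M) $$ (i,j)) div 2)"

definition lattice_plus :: "int vec set" where
  "lattice_plus = {x \<in> carrier_vec (2*n). M *\<^sub>v x = x}"

definition lattice_minus :: "int vec set" where
  "lattice_minus = {x \<in> carrier_vec (2*n). M *\<^sub>v x = - x}"

lemma proj_carrier[simp]: "proj \<in> carrier_mat (2*n) (2*n)"
  and proj_dims[simp]: "dim_row proj = 2*n" "dim_col proj = 2*n"
  unfolding proj_def by simp_all

lemma one_plus_M_mod_4:
  assumes "i < 2*n" "j < 2*n"
  shows "[(1\<^sub>m (2*n) + M) $$ (i,j) = 2 * (if i = j \<and> i < n then 1 else 0)] (mod 4)"
proof -
  have "[M $$ (i,j) = sign_mat n $$ (i,j)] (mod 4)" using M_cong_sign assms unfolding cong_mat_def by auto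
  then have "[1\<^sub>m (2*n) $$ (i,j) + M $$ (i,j) = 1\<^sub>m (2*n) $$ (i,j) + sign_mat n $$ (i,j)] (mod 4)"
    by (rule cong_add[OF cong_refl])
  then show ?thesis using assms M_carrier by (auto simp: sign_mat_def block_sign_def)
qed

lemma two_times_proj:
  assumes "i < 2*n" "j < 2*n"
  shows "2 * proj $$ (i,j) = (1\<^sub>m (2*n) + M) $$ (i,j)"
    and "[proj $$ (i,j) = (if i = j \<and> i < n then 1 else 0)] (mod 2)"
proof -
  obtain e where "[(1\<^sub>m (2*n) + M) $$ (i,j) = 2 * e] (mod 4)" "e = (if i = j \<and> i < n then 1 else 0)"
    using one_plus_M_mod_4[OF assms] by blast
  from this(1) have "4 dvd (1\<^sub>m (2*n) + M) $$ (i,j) - 2 * e" unfolding cong_iff_dvd_diff .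
  then have "2 * ((1\<^sub>m (2*n) + M) $$ (i,j) div 2) = (1\<^sub>m (2*n) + M) $$ (i,j)"
    and "2 dvd (1\<^sub>m (2*n) + M) $$ (i,j) div 2 - e" by presburger+
  then show "2 * proj $$ (i,j) = (1\<^sub>m (2*n) + M) $$ (i,j)"
    and "[proj $$ (i,j) = (if i = j \<and> i < n then 1 else 0)] (mod 2)"
    using assms \<open>e = _\<close> unfolding proj_def cong_iff_dvd_diff by auto
qed

lemma two_proj_mult_vec:
  assumes x: "x \<in> carrier_vec (2*n)"
  shows "2 \<cdot>\<^sub>v (proj *\<^sub>v x) = x + M *\<^sub>v x"
proof (rule eq_vecI)
  fix i assume "i < dim_vec (x + M *\<^sub>v x)"
  then have i: "i < 2*n" using x M_carrier by simp
  have "2 * (proj *\<^sub>v x) $ i = (\<Sum>k = 0..<2*n. (2 * proj $$ (i,k)) * x $ k)"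
    using i x by (auto simp: scalar_prod_def sum_distrib_left mult.assoc intro!: sum.cong)
  also have "\<dots> = ((1\<^sub>m (2*n) + M) *\<^sub>v x) $ i"
    using i x M_carrier by (auto simp: two_times_proj scalar_prod_def intro!: sum.cong)
  also have "\<dots> = (x + M *\<^sub>v x) $ i"
    using x M_carrier by (simp add: add_mult_distrib_mat_vec[OF one_carrier_mat M_carrier x])
  finally show "(2 \<cdot>\<^sub>v (proj *\<^sub>v x)) $ i = (x + M *\<^sub>v x) $ i" using i by simp
qed (use x M_carrier in simp)

lemma two_proj_mult_vec_index:
  assumes "x \<in> carrier_vec (2*n)" "i < 2*n"
  shows "2 * (proj *\<^sub>v x) $ i = x $ i + (M *\<^sub>v x) $ i"
  using arg_cong[OF two_proj_mult_vec[OF assms(1)], of "\<lambda>v. v $ i"] assms M_carrier by simp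

lemma proj_mult_vec_lattice_plus:
  assumes x: "x \<in> carrier_vec (2*n)"
  shows "proj *\<^sub>v x \<in> lattice_plus"
proof -
  have "2 \<cdot>\<^sub>v (M *\<^sub>v (proj *\<^sub>v x)) = M *\<^sub>v (2 \<cdot>\<^sub>v (proj *\<^sub>v x))"
    using x M_carrier by (simp add: mult_mat_vec_smult)
  also have "\<dots> = M *\<^sub>v (x + M *\<^sub>v x)" using x by (simp add: two_proj_mult_vec)
  also have "\<dots> = M *\<^sub>v x + (M * M) *\<^sub>v x"
    using x M_carrier by (simp add: mult_add_distrib_mat_vec[of M "2*n" "2*n"])
  also have "\<dots> = 2 \<cdot>\<^sub>v (proj *\<^sub>v x)"
    using x M_carrier by (simp add: M_involution two_proj_mult_vec comm_add_vec[of "M *\<^sub>v x" "2*n"])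
  finally have "M *\<^sub>v (proj *\<^sub>v x) = proj *\<^sub>v x" by (rule smult_vec_cancel_int[rotated]) simp
  then show ?thesis unfolding lattice_plus_def using x by simp
qed

lemma proj_fixes_lattice_plus:
  assumes x: "x \<in> lattice_plus"
  shows "proj *\<^sub>v x = x"
proof (rule smult_vec_cancel_int[of 2])
  have xc: "x \<in> carrier_vec (2*n)" and "M *\<^sub>v x = x" using x unfolding lattice_plus_def by auto
  then show "2 \<cdot>\<^sub>v (proj *\<^sub>v x) = 2 \<cdot>\<^sub>v x" by (simp add: two_proj_mult_vec) (rule eq_vecI; simp)
qed simp

lemma proj_minus_lattice_minus:
  assumes x: "x \<in> carrier_vec (2*n)"
  shows "proj *\<^sub>v x - x \<in> lattice_minus"
proof -
  have "M *\<^sub>v (proj *\<^sub>v x) = proj *\<^sub>v x"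
    using proj_mult_vec_lattice_plus[OF x] unfolding lattice_plus_def by simp
  then have "M *\<^sub>v (proj *\<^sub>v x - x) = proj *\<^sub>v x - M *\<^sub>v x"
    using x M_carrier by (simp add: mult_minus_distrib_mat_vec[of M "2*n" "2*n"])
  also have "\<dots> = - (proj *\<^sub>v x - x)"
  proof (rule eq_vecI)
    fix i assume "i < dim_vec (- (proj *\<^sub>v x - x))"
    then show "(proj *\<^sub>v x - M *\<^sub>v x) $ i = (- (proj *\<^sub>v x - x)) $ i"
      using x M_carrier two_proj_mult_vec_index[OF x, of i] by simp
  qed (use x M_carrier in simp)
  finally show ?thesis unfolding lattice_minus_def using x by simp
qed

lemma symp_form_M:
  assumes x: "x \<in> carrier_vec (2*n)" and y: "y \<in> carrier_vec (2*n)"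
  shows "symp_form n (M *\<^sub>v x) (M *\<^sub>v y) = - symp_form n x y"
proof -
  have "symp_form n (M *\<^sub>v x) (M *\<^sub>v y) = x \<bullet> (transpose_mat M *\<^sub>v (Jmat n *\<^sub>v (M *\<^sub>v y)))"
    unfolding symp_form_def using transpose_vec_mult_scalar[of "transpose_mat M" "2*n" "2*n" "Jmat n *\<^sub>v (M *\<^sub>v y)" x]
      M_carrier x y by simp
  also have "transpose_mat M *\<^sub>v (Jmat n *\<^sub>v (M *\<^sub>v y)) = (transpose_mat M * Jmat n * M) *\<^sub>v y"
    using M_carrier y assoc_mult_mat_vec[of "transpose_mat M * Jmat n" "2*n" "2*n" M "2*n" y]
      assoc_mult_mat_vec[of "transpose_mat M" "2*n" "2*n" "Jmat n" "2*n" "M *\<^sub>v y"] by simp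
  finally show ?thesis unfolding symp_form_def M_antisymplectic using x y by simp
qed

lemma symp_form_lattice_plus: "x \<in> lattice_plus \<Longrightarrow> y \<in> lattice_plus \<Longrightarrow> symp_form n x y = 0"
  using symp_form_M[of x y] unfolding lattice_plus_def by auto

lemma symp_form_lattice_minus:
  assumes "x \<in> lattice_minus" "y \<in> lattice_minus"
  shows "symp_form n x y = 0"
proof -
  have "symp_form n (- x) (- y) = symp_form n x y"
    using assms unfolding lattice_minus_def symp_form_def by (simp add: mult_mat_vec_uminus[of _ "2*n" "2*n"])
  then show ?thesis using symp_form_M[of x y] assms unfolding lattice_minus_def by auto
qed

lemma proj_unit_vec_lattice_plus: "k < 2*n \<Longrightarrow> proj *\<^sub>v unit_vec (2*n) k \<in> lattice_plus"
  by (rule proj_mult_vec_lattice_plus) simp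

lemma upper_lattice_plus_basis:
  "\<exists>b. (\<forall>j<n. b j \<in> upper_part n ` lattice_plus) \<and> (\<forall>j<n. \<forall>i. [b j i = (if i = j then 1 else 0)] (mod 2)) \<and>
     (\<forall>u\<in>upper_part n ` lattice_plus. \<exists>y. \<forall>i. u i = (\<Sum>j<n. y j * b j i))"
proof (rule int_submodule_basis_mod_2)
  show "int_submodule (upper_part n ` lattice_plus)" unfolding int_submodule_def
  proof (intro conjI ballI allI)
    fix u v assume "u \<in> upper_part n ` lattice_plus" "v \<in> upper_part n ` lattice_plus"
    then obtain x y where "x \<in> lattice_plus" "y \<in> lattice_plus" "u = upper_part n x" "v = upper_part n y" by auto
    moreover have "x - y \<in> lattice_plus" if "x \<in> lattice_plus" "y \<in> lattice_plus" for x y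
      using that M_carrier unfolding lattice_plus_def by (auto simp: mult_minus_distrib_mat_vec[of M "2*n" "2*n"])
    ultimately show "(\<lambda>i. u i - v i) \<in> upper_part n ` lattice_plus"
      unfolding lattice_plus_def upper_part_def by (intro image_eqI[of _ _ "x - y"]) auto
  next
    fix v c assume "v \<in> upper_part n ` lattice_plus"
    then obtain x where "x \<in> lattice_plus" "v = upper_part n x" by auto
    moreover have "c \<cdot>\<^sub>v x \<in> lattice_plus" if "x \<in> lattice_plus" for x
      using that M_carrier unfolding lattice_plus_def by (auto simp: mult_mat_vec_smult)
    ultimately show "(\<lambda>i. c * v i) \<in> upper_part n ` lattice_plus"
      unfolding lattice_plus_def upper_part_def by (intro image_eqI[of _ _ "c \<cdot>\<^sub>v x"]) auto
  qed
  show "\<forall>v\<in>upper_part n ` lattice_plus. \<forall>i\<ge>n. v i = 0" unfolding upper_part_def by auto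
  show "\<forall>i<n. \<exists>v\<in>upper_part n ` lattice_plus. \<forall>j. [v j = (if j = i then 1 else 0)] (mod 2)"
  proof (intro allI impI)
    fix i assume i: "i < n"
    have "[upper_part n (proj *\<^sub>v unit_vec (2*n) i) j = (if j = i then 1 else 0)] (mod 2)" for j
      using two_times_proj(2)[of j i] i unfolding upper_part_def by auto
    moreover have "upper_part n (proj *\<^sub>v unit_vec (2*n) i) \<in> upper_part n ` lattice_plus"
      using proj_unit_vec_lattice_plus[of i] i by simp
    ultimately show "\<exists>v\<in>upper_part n ` lattice_plus. \<forall>j. [v j = (if j = i then 1 else 0)] (mod 2)"
      by (intro bexI) auto
  qed
qed

lemma upper_part_coordinates:
  assumes c: "\<forall>k\<in>{..<2*n}. \<forall>i. upper_part n (proj *\<^sub>v unit_vec (2*n) k) i = (\<Sum>j<n. c k j * b j i)"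
    and x: "x \<in> lattice_plus" and l: "l < n"
  shows "(\<Sum>j<n. (x \<bullet> vec (2*n) (\<lambda>k. c k j)) * b j l) = upper_part n x l"
proof -
  have xc: "x \<in> carrier_vec (2*n)" using x unfolding lattice_plus_def by simp
  have "(\<Sum>j<n. (x \<bullet> vec (2*n) (\<lambda>k. c k j)) * b j l) = (\<Sum>j<n. \<Sum>k = 0..<2*n. x $ k * (c k j * b j l))"
    unfolding scalar_prod_def using xc by (simp add: sum_distrib_right mult.assoc)
  also have "\<dots> = (\<Sum>k = 0..<2*n. \<Sum>j<n. x $ k * (c k j * b j l))" by (rule sum.swap)
  also have "\<dots> = (\<Sum>k = 0..<2*n. x $ k * (\<Sum>j<n. c k j * b j l))" by (simp add: sum_distrib_left)
  also have "\<dots> = (\<Sum>k = 0..<2*n. proj $$ (l,k) * x $ k)"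
  proof (rule sum.cong)
    fix k assume "k \<in> {0..<2*n}"
    then have "(\<Sum>j<n. c k j * b j l) = proj $$ (l,k)"
      using c[rule_format, of k l] l by (simp add: upper_part_def)
    then show "x $ k * (\<Sum>j<n. c k j * b j l) = proj $$ (l,k) * x $ k" by simp
  qed simp
  also have "\<dots> = (proj *\<^sub>v x) $ l" using l xc by (simp add: scalar_prod_def)
  also have "\<dots> = upper_part n x l" using proj_fixes_lattice_plus[OF x] l by (simp add: upper_part_def)
  finally show ?thesis .
qed

lemma lattice_plus_dual_system:
  "\<exists>X w. (\<forall>j<n. X j \<in> lattice_plus \<and> (\<forall>i<n. [X j $ i = (if i = j then 1 else 0)] (mod 2))) \<and>
     (\<forall>j<n. w j \<in> carrier_vec (2*n)) \<and> (\<forall>i<n. \<forall>j<n. X i \<bullet> w j = (if i = j then 1 else 0))"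
proof -
  obtain b where b: "\<forall>j<n. b j \<in> upper_part n ` lattice_plus"
    and b_mod_2: "\<forall>j<n. \<forall>i. [b j i = (if i = j then 1 else 0)] (mod 2)"
    and b_span: "\<forall>u\<in>upper_part n ` lattice_plus. \<exists>y. \<forall>i. u i = (\<Sum>j<n. y j * b j i)"
    using upper_lattice_plus_basis by blast
  obtain X where X: "\<forall>j\<in>{..<n}. X j \<in> lattice_plus \<and> upper_part n (X j) = b j"
    using bchoice[of "{..<n}" "\<lambda>j x. x \<in> lattice_plus \<and> upper_part n x = b j"] b by force
  \<comment> \<open>the coordinates of the columns of \<open>proj\<close> with respect to \<open>b\<close> give the dual functionals\<close>
  obtain c where c: "\<forall>k\<in>{..<2*n}. \<forall>i. upper_part n (proj *\<^sub>v unit_vec (2*n) k) i = (\<Sum>j<n. c k j * b j i)"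
    using bchoice[of "{..<2*n}" "\<lambda>k y. \<forall>i. upper_part n (proj *\<^sub>v unit_vec (2*n) k) i = (\<Sum>j<n. y j * b j i)"]
      b_span proj_unit_vec_lattice_plus by force
  define w where "w j = vec (2*n) (\<lambda>k. c k j)" for j
  have "X i \<bullet> w j = (if i = j then 1 else 0)" if i: "i < n" and j: "j < n" for i j
  proof -
    have "(\<Sum>j<n. (X i \<bullet> w j) * b j l) = b i l" if "l < n" for l
      using upper_part_coordinates[OF c, of "X i" l] X i that unfolding w_def by auto
    then have "\<forall>l<n. (\<Sum>j<n. (X i \<bullet> w j - (if i = j then 1 else 0)) * b j l) = 0"
      using i by (simp add: left_diff_distrib sum_subtractf if_distrib[of "\<lambda>x. x * _"] cong: if_cong)
    from unit_vectors_mod_2_independent[OF b_mod_2 this] show ?thesis using j by simp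
  qed
  moreover have "\<forall>j<n. w j \<in> carrier_vec (2*n)" unfolding w_def by simp
  moreover have "\<forall>j<n. \<forall>i<n. [X j $ i = (if i = j then 1 else 0)] (mod 2)"
  proof (intro allI impI)
    fix j i assume "j < n" "i < n"
    then have "upper_part n (X j) i = b j i" using X by simp
    then have "X j $ i = b j i" using \<open>i < n\<close> by (simp add: upper_part_def)
    then show "[X j $ i = (if i = j then 1 else 0)] (mod 2)" using b_mod_2 \<open>j < n\<close> by simp
  qed
  ultimately show ?thesis using X by blast
qed

lemma lattice_symplectic_pairs:
  "\<exists>X Q. (\<forall>j<n. X j \<in> lattice_plus \<and> Q j \<in> lattice_minus) \<and>
     (\<forall>j<n. \<forall>i<n. [X j $ i = (if i = j then 1 else 0)] (mod 2)) \<and>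
     (\<forall>i<n. \<forall>j<n. symp_form n (X i) (Q j) = (if i = j then 1 else 0))"
proof -
  obtain X w where X: "\<forall>j<n. X j \<in> lattice_plus"
    and X_mod_2: "\<forall>j<n. \<forall>i<n. [X j $ i = (if i = j then 1 else 0)] (mod 2)"
    and w: "\<forall>j<n. w j \<in> carrier_vec (2*n)" and Xw: "\<forall>i<n. \<forall>j<n. X i \<bullet> w j = (if i = j then 1 else 0)"
    using lattice_plus_dual_system by blast
  define Q where "Q j = proj *\<^sub>v (Jmat n *\<^sub>v w j) - Jmat n *\<^sub>v w j" for j
  have Xc: "\<forall>j<n. X j \<in> carrier_vec (2*n)" using X unfolding lattice_plus_def by auto
  have Q: "\<forall>j<n. Q j \<in> lattice_minus" unfolding Q_def using w by (auto intro: proj_minus_lattice_minus)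
  have XQ: "symp_form n (X i) (Q j) = (if i = j then 1 else 0)" if "i < n" "j < n" for i j
  proof -
    have wj: "w j \<in> carrier_vec (2*n)" using w that by simp
    have "symp_form n (X i) (Q j)
        = symp_form n (X i) (proj *\<^sub>v (Jmat n *\<^sub>v w j)) - X i \<bullet> ((Jmat n * Jmat n) *\<^sub>v w j)"
      unfolding Q_def symp_form_def using Xc wj that assoc_mult_mat_vec[of "Jmat n" "2*n" "2*n" "Jmat n" "2*n" "w j"]
      by (simp add: mult_minus_distrib_mat_vec[of _ "2*n" "2*n"] scalar_prod_minus_distrib[of _ "2*n"])
    also have "symp_form n (X i) (proj *\<^sub>v (Jmat n *\<^sub>v w j)) = 0"
      using X that wj by (intro symp_form_lattice_plus proj_mult_vec_lattice_plus) auto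
    also have "X i \<bullet> ((Jmat n * Jmat n) *\<^sub>v w j) = - (X i \<bullet> w j)"
      using Xc wj that by (simp add: Jmat_squared)
    finally show ?thesis using Xw that by simp
  qed
  show ?thesis using X Q X_mod_2 XQ by blast
qed

lemma exists_Sp_sign_eigenbasis:
  "\<exists>g. g \<in> Sp n \<and> cong_mat 2 g (1\<^sub>m (2*n)) \<and> M * g = g * sign_mat n"
proof -
  obtain X Q where XQ_lattice: "\<forall>j<n. X j \<in> lattice_plus \<and> Q j \<in> lattice_minus"
    and X_mod_2: "\<forall>j<n. \<forall>i<n. [X j $ i = (if i = j then 1 else 0)] (mod 2)"
    and XQ: "\<forall>i<n. \<forall>j<n. symp_form n (X i) (Q j) = (if i = j then 1 else 0)"
    using lattice_symplectic_pairs by blast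
  have Xc: "\<forall>j<n. X j \<in> carrier_vec (2*n)" and Qc: "\<forall>j<n. Q j \<in> carrier_vec (2*n)"
    using XQ_lattice unfolding lattice_plus_def lattice_minus_def by auto
  define g where "g = block_cols n X Q"
  have gc: "g \<in> carrier_mat (2*n) (2*n)" unfolding g_def by simp
  have col_g: "j < 2*n \<Longrightarrow> col g j = (if j < n then X j else Q (j - n))" for j
    unfolding g_def using Xc Qc by (rule col_block_cols)
  have g_Sp: "g \<in> Sp n" unfolding g_def
    using Xc Qc XQ XQ_lattice symp_form_lattice_plus symp_form_lattice_minus by (intro block_cols_Sp) auto
  have Mg: "M * g = g * sign_mat n"
  proof (rule eq_matI)
    fix i j assume "i < dim_row (g * sign_mat n)" "j < dim_col (g * sign_mat n)"
    then have ij: "i < 2*n" "j < 2*n" unfolding g_def by auto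
    have "M *\<^sub>v col g j = block_sign n j \<cdot>\<^sub>v col g j"
      using col_g[OF ij(2)] XQ_lattice ij(2) unfolding lattice_plus_def lattice_minus_def block_sign_def by auto
    moreover have "(M * g) $$ (i,j) = (M *\<^sub>v col g j) $ i" using ij M_carrier unfolding g_def by simp
    ultimately have "(M * g) $$ (i,j) = g $$ (i,j) * block_sign n j" using ij unfolding g_def by simp
    also have "\<dots> = (g * sign_mat n) $$ (i,j)"
      using ij by (intro index_mult_sign_mat[symmetric]) (auto simp: g_def)
    finally show "(M * g) $$ (i,j) = (g * sign_mat n) $$ (i,j)" .
  qed (use M_carrier in \<open>auto simp: g_def\<close>)
  have "cong_mat 4 (sign_mat n * g * sign_mat n) (M * g * sign_mat n)"
    using gc M_carrier by (intro cong_mat_mult cong_mat_sym[OF M_cong_sign] cong_mat_refl) auto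
  then have "cong_mat 4 (tau n g) g"
    using gc Mg by (simp add: tau_eq_sign_conj assoc_mult_sq_mat[where k="2*n"] sign_mat_squared)
  moreover have "\<forall>i<n. \<forall>j<n. [g $$ (i,j) = (if i = j then 1 else 0)] (mod 2)"
    using X_mod_2 unfolding g_def block_cols_def by auto
  ultimately have "cong_mat 2 g (1\<^sub>m (2*n))" by (rule Sp_cong_one_mod_2[OF g_Sp])
  then show ?thesis using g_Sp Mg by blast
qed

end

lemma antisymplectic_involution_sign_cocycle:
  assumes "\<gamma> \<in> cocycles n N" "4 dvd N"
  shows "antisymplectic_involution n (sign_mat n * \<gamma>)"
proof
  have \<gamma>: "\<gamma> \<in> Sp n" "cong_mat N \<gamma> (1\<^sub>m (2*n))" "\<gamma> * tau n \<gamma> = 1\<^sub>m (2*n)"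
    using assms(1) unfolding cocycles_def Gamma_princ_iff by auto
  have \<gamma>c: "\<gamma> \<in> carrier_mat (2*n) (2*n)" using \<gamma>(1) Sp_carrier by auto
  show "sign_mat n * \<gamma> \<in> carrier_mat (2*n) (2*n)" using \<gamma>c by simp
  have "tau n \<gamma> * \<gamma> = 1\<^sub>m (2*n)"
    by (rule mat_mult_left_right_inverse_comm_ring[OF \<gamma>c _ \<gamma>(3)]) (use \<gamma>c in simp)
  then show "sign_mat n * \<gamma> * (sign_mat n * \<gamma>) = 1\<^sub>m (2*n)"
    using \<gamma>c by (simp add: tau_eq_sign_conj assoc_mult_sq_mat[where k="2*n"])
  show "transpose_mat (sign_mat n * \<gamma>) * Jmat n * (sign_mat n * \<gamma>) = - Jmat n"
    using \<gamma>(1) \<gamma>c unfolding Sp_def by (simp add: transpose_sign_conj_Jmat)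
  have "cong_mat N (sign_mat n * \<gamma>) (sign_mat n * 1\<^sub>m (2*n))"
    using \<gamma>c by (intro cong_mat_mult[OF cong_mat_refl \<gamma>(2)]) simp
  then show "cong_mat 4 (sign_mat n * \<gamma>) (sign_mat n)" using assms(2) cong_mat_dvd_modulus by simp
qed

lemma cocycle_eq_coboundary:
  assumes \<gamma>: "\<gamma> \<in> cocycles n (4*m)"
  shows "\<exists>g \<in> Gamma_2m_2 n m. coboundary n g = \<gamma>"
proof -
  interpret antisymplectic_involution n "sign_mat n * \<gamma>"
    by (rule antisymplectic_involution_sign_cocycle[OF \<gamma>]) simp
  obtain g where g: "g \<in> Sp n" "cong_mat 2 g (1\<^sub>m (2*n))" and Mg: "sign_mat n * \<gamma> * g = g * sign_mat n"
    using exists_Sp_sign_eigenbasis by blast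
  have gc: "g \<in> carrier_mat (2*n) (2*n)" and \<gamma>c: "\<gamma> \<in> carrier_mat (2*n) (2*n)"
    using g(1) \<gamma> Sp_carrier cocycles_carrier by auto
  have "sign_mat n * (sign_mat n * \<gamma> * g) = (sign_mat n * sign_mat n) * (\<gamma> * g)"
    using gc \<gamma>c by (simp add: assoc_mult_sq_mat[where k="2*n"])
  then have "\<gamma> * g = sign_mat n * (sign_mat n * \<gamma> * g)" using gc \<gamma>c by (simp add: sign_mat_squared)
  also have "\<dots> = tau n g" using gc by (simp add: Mg tau_eq_sign_conj assoc_mult_sq_mat[where k="2*n"])
  finally have tau_g: "tau n g = \<gamma> * g" ..
  have "cong_mat (4*m) (\<gamma> * g) (1\<^sub>m (2*n) * g)"
    using \<gamma> gc \<gamma>c unfolding cocycles_def Gamma_princ_iff by (intro cong_mat_mult cong_mat_refl) auto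
  then have "g \<in> Gamma_2m_2 n m" using g gc tau_g unfolding Gamma_2m_2_iff by simp
  moreover have "\<gamma> = coboundary n g" by (rule coboundary_unique[OF g(1) \<gamma>c tau_g[symmetric]])
  ultimately show ?thesis by blast
qed

lemma bij_betw_factor_image:
  assumes "\<And>x y. x \<in> A \<Longrightarrow> y \<in> A \<Longrightarrow> f x = f y \<longleftrightarrow> g x = g y"
  shows "\<exists>F. (\<forall>x\<in>A. F (f x) = g x) \<and> bij_betw F (f ` A) (g ` A)"
proof -
  define F where "F z = g (inv_into A f z)" for z
  have F: "F (f x) = g x" if "x \<in> A" for x
    unfolding F_def using assms that inv_into_into[of "f x" f A] f_inv_into_f[of "f x" f A] by auto
  have "inj_on F (f ` A)" using F assms by (auto intro!: inj_onI)
  moreover have "F ` f ` A = g ` A" using F by (auto simp: image_image)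
  ultimately show ?thesis using F unfolding bij_betw_def by blast
qed

theorem lemma4p2:
  fixes n :: nat and m :: int
  assumes "m \<ge> 1"
  shows "\<exists>F. (\<forall>g \<in> Gamma_2m_2 n m.
              F (dcoset n (4*m) g) = coh_class n (4*m) (tau n g * int_mat_inv g))
          \<and> bij_betw F (double_cosets n m) (H1 n (4*m))"
proof -
  let ?G = "Gamma_2m_2 n m" and ?c = "\<lambda>g. coh_class n (4*m) (coboundary n g)"
  have "dcoset n (4*m) g1 = dcoset n (4*m) g2 \<longleftrightarrow> ?c g1 = ?c g2" if "g1 \<in> ?G" "g2 \<in> ?G" for g1 g2
    using that dcoset_eq_iff[of g1 n g2 "4*m"] cohomologous_coboundary_iff[OF that]
      eq_equiv_class_iff[OF cohomologous_equiv coboundary_cocycle coboundary_cocycle]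
    by (simp add: coh_class_def Gamma_2m_2_iff Sp_carrier)
  then obtain F where F: "\<forall>g\<in>?G. F (dcoset n (4*m) g) = ?c g" "bij_betw F (dcoset n (4*m) ` ?G) (?c ` ?G)"
    using bij_betw_factor_image[of ?G "dcoset n (4*m)" ?c] by blast
  have "?c ` ?G = H1 n (4*m)"
    unfolding H1_def coh_class_def quotient_def using coboundary_cocycle cocycle_eq_coboundary by blast
  then show ?thesis using F unfolding double_cosets_def coboundary_def by auto
qed

end
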